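(* Let $(G,N,\theta)_{\mathcal H}\ge_c(H,M,\varphi)_{\mathcal H}$. Suppose that $L\trianglelefteq G$ is contained in $\ker\theta\cap\ker\varphi\cap\mathbf C_G(N)$ and that $\mathbf C_{G/L}(N/L)=\mathbf C_G(N)/L$. Then $(G/L,N/L,\theta)_{\mathcal H}\ge_c(H/L,M/L,\varphi)_{\mathcal H}$, where $\theta$ and $\varphi$ are regarded as characters of $N/L$ and $M/L$.
   Context: All groups are finite; $p$ is a fixed prime. $\mathbb Q^{\mathrm{ab}}\subseteq\mathbb C$ is generated by all roots of unity, $\mathcal G=\mathrm{Gal}(\mathbb Q^{\mathrm{ab}}/\mathbb Q)$, $\mathcal H\le\mathcal G$ consists of those $\sigma$ for which there is an integer $f$ with $\sigma(\xi)=\xi^{p^f}$ for all roots of unity $\xi$ of order prime to $p$. For $N\trianglelefteq G$, $\theta\in\mathrm{Irr}(N)$, $g\in G$, $\sigma\in\mathcal G$: $\theta^{g\sigma}(n)=\sigma(\theta(gng^{-1}))$; $A_\theta$ the stabilizer in $A\le G\times\mathcal G$; $\theta^{\mathcal H}$ the $\mathcal H$-orbit; $G_{\theta^{\mathcal H}}=\{g:\theta^g\in\theta^{\mathcal H}\}$. $(G,N,\theta)_{\mathcal H}$ is an $\mathcal H$-triple if $N\trianglelefteq G$, $\theta\in\mathrm{Irr}(N)$, $G_{\theta^{\mathcal H}}=G$. Projective representation $\mathcal P$ with factor set $\alpha$: $\mathcal P(x)\mathcal P(y)=\alpha(x,y)\mathcal P(xy)$. For $G$-invariant $\theta$, $\mathcal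 P$ is associated with $\theta$ if $\mathcal P_N$ affords $\theta$ and $\mathcal P(ng)=\mathcal P(n)\mathcal P(g)$, $\mathcal P(gn)=\mathcal P(g)\mathcal P(n)$. $\mathcal Q\sim\mu\mathcal P$ means $\mathcal Q(x)=\mu(x)M^{-1}\mathcal P(x)M$ for fixed invertible $M$. For $\mathcal P$ associated with $\theta$ on $G_\theta$ with entries in $\mathbb Q^{\mathrm{ab}}$ and $\theta^{x\sigma}=\theta$: $\mathcal P^{x\sigma}(y)=\sigma(\mathcal P(xyx^{-1}))$, and $\mu_{x\sigma}$ is the unique function $G_\theta\to\mathbb C^\times$, constant on $N$-cosets, $\mu_{x\sigma}(1)=1$, with $\mathcal P^{x\sigma}\sim\mu_{x\sigma}\mathcal P$. $(G,N,\theta)_{\mathcal H}\ge_c(H,M,\varphi)_{\mathcal H}$ (both $\mathcal H$-triples, $H\le G$) means: (i) $G=NH$, $N\cap H=M$, $\mathbf C_G(N)\subseteq H$; (ii) $(H\times\mathcal H)_\theta=(H\times\mathcal H)_\varphi$; (iii) there are projective representations $\mathcal P$ of $G_\theta$ associated with $\theta$ and $\mathcal P'$ of $H_\varphi$ associated with $\varphi$, entries in $\mathbb Q^{\mathrm{ab}}$, factor sets with root-of-unity values agreeing on $H_\theta\times H_\theta$, and $\mathcal P(c),\mathcal P'(c)$ the same scalar for all $c\in\mathbf C_G(N)$; (iv) $\mu_a=\mu'_a$ on $H_\theta$ for all $a\in(H\times\mathcal H)_\theta$. *)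

theory Defs
  imports "Jordan_Normal_Form.Matrix" "HOL-Algebra.Coset"
begin

definition root_of_unity :: "complex \<Rightarrow> bool" where
  "root_of_unity z \<longleftrightarrow> (\<exists>n::nat. n > 0 \<and> z ^ n = 1)"

definition Qab :: "complex set" where
  "Qab = \<Inter> {F. (\<forall>z. root_of_unity z \<longrightarrow> z \<in> F) \<and> 0 \<in> F \<and> 1 \<in> F \<and>
            (\<forall>x\<in>F. \<forall>y\<in>F. x + y \<in> F \<and> x * y \<in> F) \<and> (\<forall>x\<in>F. - x \<in> F) \<and>
            (\<forall>x\<in>F. x \<noteq> 0 \<longrightarrow> inverse x \<in> F)}"

text \<open>Elements of Gal(Q^ab/Q), represented as maps on C that are field automorphisms
  of Q^ab and the identity outside Q^ab.\<close>
definition GalQab :: "(complex \<Rightarrow> complex) set" where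
  "GalQab = {\<sigma>. bij_betw \<sigma> Qab Qab \<and>
      (\<forall>x\<in>Qab. \<forall>y\<in>Qab. \<sigma> (x + y) = \<sigma> x + \<sigma> y \<and> \<sigma> (x * y) = \<sigma> x * \<sigma> y) \<and>
      (\<forall>x. x \<notin> Qab \<longrightarrow> \<sigma> x = x)}"

text \<open>H: sigma acts on roots of unity of order prime to p as xi |-> xi^(p^f) for some integer f.
  For negative f, xi^(p^f) is the unique p^(-f)-th root of xi of order prime to p, so the
  condition sigma(xi) = xi^(p^f) is written as sigma(xi)^(p^(-f)) = xi.\<close>
definition HGal :: "nat \<Rightarrow> (complex \<Rightarrow> complex) set" where
  "HGal p = {\<sigma> \<in> GalQab. \<exists>f::int. \<forall>\<xi>::complex.
      (\<exists>n::nat. n > 0 \<and> coprime n p \<and> \<xi> ^ n = 1) \<longrightarrow>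
        (\<sigma> \<xi>) ^ (p ^ nat (- f)) = \<xi> ^ (p ^ nat f)}"

definition normal_in :: "('a, 'b) monoid_scheme \<Rightarrow> 'a set \<Rightarrow> 'a set \<Rightarrow> bool" where
  "normal_in G K N \<longleftrightarrow> subgroup N G \<and> N \<subseteq> K \<and>
     (\<forall>k\<in>K. \<forall>n\<in>N. k \<otimes>\<^bsub>G\<^esub> n \<otimes>\<^bsub>G\<^esub> inv\<^bsub>G\<^esub> k \<in> N)"

definition cent :: "('a, 'b) monoid_scheme \<Rightarrow> 'a set \<Rightarrow> 'a set \<Rightarrow> 'a set" where
  "cent G K N = {g \<in> K. \<forall>n\<in>N. g \<otimes>\<^bsub>G\<^esub> n = n \<otimes>\<^bsub>G\<^esub> g}"

definition mtrace :: "complex mat \<Rightarrow> complex" where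
  "mtrace A = (\<Sum>i<dim_row A. A $$ (i, i))"

definition is_rep :: "('a, 'b) monoid_scheme \<Rightarrow> 'a set \<Rightarrow> nat \<Rightarrow> ('a \<Rightarrow> complex mat) \<Rightarrow> bool" where
  "is_rep G K d X \<longleftrightarrow> (\<forall>k\<in>K. X k \<in> carrier_mat d d) \<and> X \<one>\<^bsub>G\<^esub> = 1\<^sub>m d \<and>
     (\<forall>x\<in>K. \<forall>y\<in>K. X (x \<otimes>\<^bsub>G\<^esub> y) = X x * X y)"

definition irr_rep :: "('a, 'b) monoid_scheme \<Rightarrow> 'a set \<Rightarrow> nat \<Rightarrow> ('a \<Rightarrow> complex mat) \<Rightarrow> bool" where
  "irr_rep G K d X \<longleftrightarrow> is_rep G K d X \<and> d > 0 \<and>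
     \<not> (\<exists>W. W \<subseteq> carrier_vec d \<and> 0\<^sub>v d \<in> W \<and> (\<forall>v\<in>W. \<forall>w\<in>W. v + w \<in> W) \<and>
           (\<forall>c. \<forall>v\<in>W. c \<cdot>\<^sub>v v \<in> W) \<and> W \<noteq> {0\<^sub>v d} \<and> W \<noteq> carrier_vec d \<and>
           (\<forall>k\<in>K. \<forall>w\<in>W. X k *\<^sub>v w \<in> W))"

definition irr_char :: "('a, 'b) monoid_scheme \<Rightarrow> 'a set \<Rightarrow> ('a \<Rightarrow> complex) \<Rightarrow> bool" where
  "irr_char G K \<chi> \<longleftrightarrow> (\<exists>d X. irr_rep G K d X \<and> (\<forall>k\<in>K. \<chi> k = mtrace (X k)))"

definition ker_char :: "('a, 'b) monoid_scheme \<Rightarrow> 'a set \<Rightarrow> ('a \<Rightarrow> complex) \<Rightarrow> 'a set" where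
  "ker_char G N \<theta> = {n \<in> N. \<theta> n = \<theta> \<one>\<^bsub>G\<^esub>}"

definition inertia :: "('a, 'b) monoid_scheme \<Rightarrow> 'a set \<Rightarrow> 'a set \<Rightarrow> ('a \<Rightarrow> complex) \<Rightarrow> 'a set" where
  "inertia G K N \<theta> = {g \<in> K. \<forall>n\<in>N. \<theta> (g \<otimes>\<^bsub>G\<^esub> n \<otimes>\<^bsub>G\<^esub> inv\<^bsub>G\<^esub> g) = \<theta> n}"

definition pstab :: "('a, 'b) monoid_scheme \<Rightarrow> nat \<Rightarrow> 'a set \<Rightarrow> 'a set \<Rightarrow> ('a \<Rightarrow> complex)
     \<Rightarrow> ('a \<times> (complex \<Rightarrow> complex)) set" where
  "pstab G p K N \<theta> = {(k, \<sigma>). k \<in> K \<and> \<sigma> \<in> HGal p \<and>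
      (\<forall>n\<in>N. \<sigma> (\<theta> (k \<otimes>\<^bsub>G\<^esub> n \<otimes>\<^bsub>G\<^esub> inv\<^bsub>G\<^esub> k)) = \<theta> n)}"

definition htriple :: "('a, 'b) monoid_scheme \<Rightarrow> nat \<Rightarrow> 'a set \<Rightarrow> 'a set \<Rightarrow> ('a \<Rightarrow> complex) \<Rightarrow> bool" where
  "htriple G p K N \<theta> \<longleftrightarrow> subgroup K G \<and> normal_in G K N \<and> irr_char G N \<theta> \<and>
     (\<forall>g\<in>K. \<exists>\<sigma>\<in>HGal p. \<forall>n\<in>N. \<theta> (g \<otimes>\<^bsub>G\<^esub> n \<otimes>\<^bsub>G\<^esub> inv\<^bsub>G\<^esub> g) = \<sigma> (\<theta> n))"

definition proj_rep :: "('a, 'b) monoid_scheme \<Rightarrow> 'a set \<Rightarrow> nat \<Rightarrow> ('a \<Rightarrow> complex mat)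
     \<Rightarrow> ('a \<Rightarrow> 'a \<Rightarrow> complex) \<Rightarrow> bool" where
  "proj_rep G K d P \<alpha> \<longleftrightarrow> (\<forall>x\<in>K. P x \<in> carrier_mat d d \<and> invertible_mat (P x)) \<and>
     (\<forall>x\<in>K. \<forall>y\<in>K. \<alpha> x y \<noteq> 0 \<and> P x * P y = \<alpha> x y \<cdot>\<^sub>m P (x \<otimes>\<^bsub>G\<^esub> y))"

definition assoc_proj :: "('a, 'b) monoid_scheme \<Rightarrow> 'a set \<Rightarrow> 'a set \<Rightarrow> ('a \<Rightarrow> complex) \<Rightarrow> nat
     \<Rightarrow> ('a \<Rightarrow> complex mat) \<Rightarrow> ('a \<Rightarrow> 'a \<Rightarrow> complex) \<Rightarrow> bool" where
  "assoc_proj G T N \<theta> d P \<alpha> \<longleftrightarrow> proj_rep G T d P \<alpha> \<and>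
     is_rep G N d P \<and> (\<forall>n\<in>N. \<theta> n = mtrace (P n)) \<and>
     (\<forall>n\<in>N. \<forall>g\<in>T. P (n \<otimes>\<^bsub>G\<^esub> g) = P n * P g \<and> P (g \<otimes>\<^bsub>G\<^esub> n) = P g * P n)"

definition is_mu :: "('a, 'b) monoid_scheme \<Rightarrow> 'a set \<Rightarrow> 'a set \<Rightarrow> ('a \<Rightarrow> complex)
     \<Rightarrow> ('a \<Rightarrow> complex mat) \<Rightarrow> 'a \<Rightarrow> (complex \<Rightarrow> complex) \<Rightarrow> ('a \<Rightarrow> complex) \<Rightarrow> bool" where
  "is_mu G K N \<theta> P x \<sigma> \<mu> \<longleftrightarrow>
     (let T = inertia G K N \<theta>; d = dim_row (P \<one>\<^bsub>G\<^esub>) in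
       (\<forall>y. y \<notin> T \<longrightarrow> \<mu> y = 0) \<and> (\<forall>y\<in>T. \<mu> y \<noteq> 0) \<and>
       (\<forall>y\<in>T. \<forall>n\<in>N. \<mu> (n \<otimes>\<^bsub>G\<^esub> y) = \<mu> y) \<and> \<mu> \<one>\<^bsub>G\<^esub> = 1 \<and>
       (\<exists>M Mi. M \<in> carrier_mat d d \<and> Mi \<in> carrier_mat d d \<and> inverts_mat M Mi \<and> inverts_mat Mi M \<and>
          (\<forall>y\<in>T. map_mat \<sigma> (P (x \<otimes>\<^bsub>G\<^esub> y \<otimes>\<^bsub>G\<^esub> inv\<^bsub>G\<^esub> x)) = \<mu> y \<cdot>\<^sub>m (Mi * P y * M))))"

definition mu :: "('a, 'b) monoid_scheme \<Rightarrow> 'a set \<Rightarrow> 'a set \<Rightarrow> ('a \<Rightarrow> complex)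
     \<Rightarrow> ('a \<Rightarrow> complex mat) \<Rightarrow> 'a \<Rightarrow> (complex \<Rightarrow> complex) \<Rightarrow> ('a \<Rightarrow> complex)" where
  "mu G K N \<theta> P x \<sigma> = (THE \<mu>. is_mu G K N \<theta> P x \<sigma> \<mu>)"

definition ge_c :: "('a, 'b) monoid_scheme \<Rightarrow> nat \<Rightarrow> 'a set \<Rightarrow> ('a \<Rightarrow> complex)
     \<Rightarrow> 'a set \<Rightarrow> 'a set \<Rightarrow> ('a \<Rightarrow> complex) \<Rightarrow> bool" where
  "ge_c G p N \<theta> H M \<phi> \<longleftrightarrow>
     htriple G p (carrier G) N \<theta> \<and> htriple G p H M \<phi> \<and>
     \<comment> \<open>(i)\<close>
     carrier G = N <#>\<^bsub>G\<^esub> H \<and> N \<inter> H = M \<and> cent G (carrier G) N \<subseteq> H \<and>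
     \<comment> \<open>(ii)\<close>
     pstab G p H N \<theta> = pstab G p H M \<phi> \<and>
     \<comment> \<open>(iii) and (iv)\<close>
     (\<exists>d P \<alpha> d' P' \<alpha>'.
        assoc_proj G (inertia G (carrier G) N \<theta>) N \<theta> d P \<alpha> \<and>
        assoc_proj G (inertia G H M \<phi>) M \<phi> d' P' \<alpha>' \<and>
        (\<forall>x\<in>inertia G (carrier G) N \<theta>. elements_mat (P x) \<subseteq> Qab) \<and>
        (\<forall>x\<in>inertia G H M \<phi>. elements_mat (P' x) \<subseteq> Qab) \<and>
        (\<forall>x\<in>inertia G (carrier G) N \<theta>. \<forall>y\<in>inertia G (carrier G) N \<theta>. root_of_unity (\<alpha> x y)) \<and>
        (\<forall>x\<in>inertia G H M \<phi>. \<forall>y\<in>inertia G H M \<phi>. root_of_unity (\<alpha>' x y)) \<and>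
        (\<forall>x\<in>inertia G H N \<theta>. \<forall>y\<in>inertia G H N \<theta>. \<alpha> x y = \<alpha>' x y) \<and>
        (\<forall>c\<in>cent G (carrier G) N. \<exists>s. P c = s \<cdot>\<^sub>m 1\<^sub>m d \<and> P' c = s \<cdot>\<^sub>m 1\<^sub>m d') \<and>
        (\<forall>h \<sigma>. (h, \<sigma>) \<in> pstab G p H N \<theta> \<longrightarrow>
           (\<forall>y\<in>inertia G H N \<theta>. mu G (carrier G) N \<theta> P h \<sigma> y = mu G H M \<phi> P' h \<sigma> y)))"

definition qimg :: "('a, 'b) monoid_scheme \<Rightarrow> 'a set \<Rightarrow> 'a set \<Rightarrow> 'a set set" where
  "qimg G L S = (\<lambda>s. L #>\<^bsub>G\<^esub> s) ` S"

text \<open>A function constant on L-cosets regarded as a function on cosets.\<close>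
definition qfun :: "('a \<Rightarrow> complex) \<Rightarrow> 'a set \<Rightarrow> complex" where
  "qfun \<theta> X = \<theta> (SOME x. x \<in> X)"

end

theory Submission
  imports Defs "Jordan_Normal_Form.Spectral_Radius"
begin

(* Composing the projective representations P of G_theta and P' of H_phi with a choice of coset
   representatives gives the data (iii) for the quotient triples: P and P' are scalar on C_G(N)
   with the same scalar, and since L lies in ker theta that scalar is 1 on L, so both factor
   through G/L.  Inertia groups, stabilizers in H x Gal and the centralizer of N/L are images of
   the corresponding objects in G, which gives (i), (ii) and the conditions on factor sets and
   scalars.  The real content is (iv), because mu is defined implicitly: it is well defined since
   the twisted representation P^(x sigma) restricted to N affords theta again and hence, by the
   orthogonality relations for irreducible characters, is similar to P restricted to N; Schur's
   lemma then makes the discrepancy on G_theta scalar and unique.  By uniqueness, the mu of the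
   quotient is the function induced by the mu of G, so (iv) descends. *)

section \<open>Matrices\<close>

lemma mat_eq_by_mult_vec:
  fixes A B :: "'c::semiring_1 mat"
  assumes A: "A \<in> carrier_mat n m" and B: "B \<in> carrier_mat n m"
    and eq: "\<And>v. v \<in> carrier_vec m \<Longrightarrow> A *\<^sub>v v = B *\<^sub>v v"
  shows "A = B"
proof (rule eq_matI)
  fix i j assume i: "i < dim_row B" and j: "j < dim_col B"
  have "(A *\<^sub>v unit_vec m j) $ i = (B *\<^sub>v unit_vec m j) $ i" using eq[of "unit_vec m j"] by simp
  then show "A $$ (i,j) = B $$ (i,j)" using A B i j by simp
qed (use A B in auto)

lemma zero_mat_mult_vec: "v \<in> carrier_vec m \<Longrightarrow> 0\<^sub>m n m *\<^sub>v v = 0\<^sub>v n"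
  by (intro eq_vecI) auto

lemma mult_mat_vec_zero: "A \<in> carrier_mat n m \<Longrightarrow> A *\<^sub>v 0\<^sub>v m = 0\<^sub>v n"
  by (intro eq_vecI) (auto simp: scalar_prod_def)

lemma one_smult_mat [simp]: "(1::'c::semiring_1) \<cdot>\<^sub>m A = A"
  by (rule eq_matI) auto

lemma zero_smult_mat: "A \<in> carrier_mat n m \<Longrightarrow> (0::'c::semiring_1) \<cdot>\<^sub>m A = 0\<^sub>m n m"
  by (rule eq_matI) auto

lemma smult_mat_cancel:
  fixes A :: "'c::field mat"
  assumes A: "A \<in> carrier_mat n m" and nz: "A \<noteq> 0\<^sub>m n m" and eq: "a \<cdot>\<^sub>m A = b \<cdot>\<^sub>m A"
  shows "a = b"
proof -
  obtain i j where i: "i < n" and j: "j < m" and e: "A $$ (i,j) \<noteq> 0"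
    using nz A by (metis carrier_matD eq_matI index_zero_mat(1,2,3))
  have "a * A $$ (i,j) = b * A $$ (i,j)" using arg_cong[OF eq, of "\<lambda>M. M $$ (i,j)"] A i j by simp
  then show ?thesis using e by simp
qed

definition inverse_mats :: "nat \<Rightarrow> 'c::semiring_1 mat \<Rightarrow> 'c mat \<Rightarrow> bool" where
  "inverse_mats d A B \<longleftrightarrow> A \<in> carrier_mat d d \<and> B \<in> carrier_mat d d \<and> A * B = 1\<^sub>m d \<and> B * A = 1\<^sub>m d"

lemma inverse_mats_sym: "inverse_mats d A B \<Longrightarrow> inverse_mats d B A"
  unfolding inverse_mats_def by auto

lemma inverse_mats_cancel:
  fixes X :: "'c::semiring_1 mat"
  assumes "inverse_mats d A B" and "X \<in> carrier_mat d m"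
  shows "A * (B * X) = X" and "B * (A * X) = X"
  using assms unfolding inverse_mats_def by (simp_all add: assoc_mult_mat[of _ d d _ d _ m, symmetric])

lemma inverse_mats_cancel_right:
  fixes X :: "'c::semiring_1 mat"
  assumes "inverse_mats d A B" and "X \<in> carrier_mat m d"
  shows "X * A * B = X" and "X * B * A = X"
  using assms unfolding inverse_mats_def by (simp_all add: assoc_mult_mat[of _ m d _ d _ d])

lemma inverse_mats_mult_vec:
  assumes "inverse_mats d A B" and "v \<in> carrier_vec d"
  shows "A *\<^sub>v (B *\<^sub>v v) = v"
proof -
  have A: "A \<in> carrier_mat d d" and B: "B \<in> carrier_mat d d" and AB: "A * B = 1\<^sub>m d"
    using assms(1) unfolding inverse_mats_def by auto
  have "A *\<^sub>v (B *\<^sub>v v) = (A * B) *\<^sub>v v" using A B assms(2) by simp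
  then show ?thesis using AB assms(2) by simp
qed

lemma inverse_mats_nonzero:
  assumes "inverse_mats d A B" and "d > 0"
  shows "A \<noteq> 0\<^sub>m d d"
proof
  assume "A = 0\<^sub>m d d"
  then have "0\<^sub>m d d = (1\<^sub>m d :: 'a mat)"
    using assms(1) left_mult_zero_mat[of B d d d] unfolding inverse_mats_def by auto
  then show False using assms(2) by (metis index_one_mat(1) index_zero_mat(1) zero_neq_one)
qed

lemma invertible_mat_inverse_mats:
  assumes "invertible_mat A" and "A \<in> carrier_mat d d"
  obtains B where "inverse_mats d A B"
proof -
  obtain B where b1: "inverts_mat A B" and b2: "inverts_mat B A"
    using assms(1) unfolding invertible_mat_def by blast
  have e1: "A * B = 1\<^sub>m d" and e2: "B * A = 1\<^sub>m (dim_row B)"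
    using b1 b2 assms(2) unfolding inverts_mat_def by auto
  have "dim_col B = d" using arg_cong[OF e1, of dim_col] by simp
  moreover have "dim_row B = d" using arg_cong[OF e2, of dim_col] assms(2) by simp
  ultimately show thesis using that e1 e2 assms(2) unfolding inverse_mats_def by auto
qed

lemma inverse_mats_conj_swap:
  fixes A B :: "'c::semiring_1 mat"
  assumes T: "inverse_mats d T Ti" and A: "A \<in> carrier_mat d d" and B: "B \<in> carrier_mat d d"
    and eq: "T * A = B * T"
  shows "A = Ti * B * T" and "B = T * A * Ti"
proof -
  have Tc: "T \<in> carrier_mat d d" and Tic: "Ti \<in> carrier_mat d d"
    using T unfolding inverse_mats_def by auto
  have "A = Ti * (T * A)" using inverse_mats_cancel(2)[OF T A] by simp
  also have "\<dots> = Ti * B * T" using eq Tc Tic B by (simp add: assoc_mult_mat[of _ d d _ d _ d])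
  finally show "A = Ti * B * T" .
  have "B = B * T * Ti" using inverse_mats_cancel_right(1)[OF T B] by simp
  also have "\<dots> = T * A * Ti" using eq Tc B by (simp add: assoc_mult_mat[of _ d d _ d _ d])
  finally show "B = T * A * Ti" .
qed

lemma inverse_mats_conj:
  assumes M: "inverse_mats d M Mi" and A: "inverse_mats d A B"
  shows "inverse_mats d (Mi * A * M) (Mi * B * M)"
proof -
  have c: "M \<in> carrier_mat d d" "Mi \<in> carrier_mat d d" "A \<in> carrier_mat d d" "B \<in> carrier_mat d d"
    and e: "M * Mi = 1\<^sub>m d" "Mi * M = 1\<^sub>m d" "A * B = 1\<^sub>m d" "B * A = 1\<^sub>m d"
    using M A unfolding inverse_mats_def by auto
  have "Mi * A * M * (Mi * B * M) = Mi * (A * (M * Mi) * B) * M"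
    and "Mi * B * M * (Mi * A * M) = Mi * (B * (M * Mi) * A) * M"
    using c by (simp_all add: assoc_mult_mat[of _ d d _ d _ d])
  moreover have "Mi * (A * (M * Mi) * B) * M = 1\<^sub>m d" and "Mi * (B * (M * Mi) * A) * M = 1\<^sub>m d"
    using c e by simp_all
  ultimately show ?thesis using c unfolding inverse_mats_def by simp
qed

lemma mtrace_smult: "A \<in> carrier_mat n n \<Longrightarrow> mtrace (c \<cdot>\<^sub>m A) = c * mtrace A"
  unfolding mtrace_def by (simp add: sum_distrib_left)

lemma mtrace_one_mat [simp]: "mtrace (1\<^sub>m d) = of_nat d"
  unfolding mtrace_def by simp

lemma mtrace_mult_comm:
  assumes A: "A \<in> carrier_mat n m" and B: "B \<in> carrier_mat m n"
  shows "mtrace (A * B) = mtrace (B * A)"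
proof -
  have "mtrace (A * B) = (\<Sum>i<n. \<Sum>k<m. A $$ (i,k) * B $$ (k,i))"
    unfolding mtrace_def using A B by (auto simp: scalar_prod_def atLeast0LessThan intro!: sum.cong)
  also have "\<dots> = (\<Sum>k<m. \<Sum>i<n. B $$ (k,i) * A $$ (i,k))"
    by (subst sum.swap) (simp add: mult.commute)
  also have "\<dots> = mtrace (B * A)"
    unfolding mtrace_def using A B by (auto simp: scalar_prod_def atLeast0LessThan intro!: sum.cong)
  finally show ?thesis .
qed

lemma mtrace_conj:
  assumes "inverse_mats d T Ti" and "A \<in> carrier_mat d d"
  shows "mtrace (T * A * Ti) = mtrace A"
proof -
  have "mtrace (T * A * Ti) = mtrace (Ti * (T * A))"
    using assms by (intro mtrace_mult_comm[of _ d d]) (auto simp: inverse_mats_def)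
  then show ?thesis using inverse_mats_cancel(2)[OF assms] by simp
qed

(* 'a mat has no zero, so families of matrices are summed entrywise. *)
definition msum :: "nat \<Rightarrow> ('x \<Rightarrow> complex mat) \<Rightarrow> 'x set \<Rightarrow> complex mat" where
  "msum d f S = mat d d (\<lambda>(i,j). \<Sum>x\<in>S. f x $$ (i,j))"

lemma msum_carrier [simp]: "msum d f S \<in> carrier_mat d d"
  and msum_dims [simp]: "dim_row (msum d f S) = d" "dim_col (msum d f S) = d"
  unfolding msum_def by simp_all

lemma index_msum [simp]: "i < d \<Longrightarrow> j < d \<Longrightarrow> msum d f S $$ (i,j) = (\<Sum>x\<in>S. f x $$ (i,j))"
  unfolding msum_def by simp

lemma msum_cong: "(\<And>x. x \<in> S \<Longrightarrow> f x = g x) \<Longrightarrow> msum d f S = msum d g S"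
  unfolding msum_def by (auto intro!: cong_mat sum.cong)

lemma msum_reindex:
  assumes "bij_betw h S S"
  shows "msum d (\<lambda>x. f (h x)) S = msum d f S"
proof -
  have "(\<Sum>x\<in>S. f (h x) $$ (i,j)) = (\<Sum>x\<in>S. f x $$ (i,j))" for i j
    using sum.reindex_bij_betw[OF assms, of "\<lambda>x. f x $$ (i,j)"] .
  then show ?thesis unfolding msum_def by simp
qed

lemma msum_mult_right:
  assumes f: "\<And>x. x \<in> S \<Longrightarrow> f x \<in> carrier_mat d d" and C: "C \<in> carrier_mat d d"
  shows "msum d f S * C = msum d (\<lambda>x. f x * C) S"
proof (rule eq_matI)
  fix i j assume "i < dim_row (msum d (\<lambda>x. f x * C) S)" and "j < dim_col (msum d (\<lambda>x. f x * C) S)"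
  then have i: "i < d" and j: "j < d" by simp_all
  have "(msum d f S * C) $$ (i,j) = (\<Sum>k<d. \<Sum>x\<in>S. f x $$ (i,k) * C $$ (k,j))"
    using i j C by (simp add: scalar_prod_def sum_distrib_right atLeast0LessThan)
  also have "\<dots> = (\<Sum>x\<in>S. \<Sum>k<d. f x $$ (i,k) * C $$ (k,j))" by (rule sum.swap)
  also have "\<dots> = (\<Sum>x\<in>S. (f x * C) $$ (i,j))"
  proof (rule sum.cong)
    fix x assume "x \<in> S"
    then show "(\<Sum>k<d. f x $$ (i,k) * C $$ (k,j)) = (f x * C) $$ (i,j)"
      using f[of x] C i j by (auto simp: scalar_prod_def atLeast0LessThan)
  qed simp
  finally show "(msum d f S * C) $$ (i,j) = msum d (\<lambda>x. f x * C) S $$ (i,j)" using i j by simp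
qed (use C in auto)

lemma msum_mult_left:
  assumes f: "\<And>x. x \<in> S \<Longrightarrow> f x \<in> carrier_mat d d" and C: "C \<in> carrier_mat d d"
  shows "C * msum d f S = msum d (\<lambda>x. C * f x) S"
proof (rule eq_matI)
  fix i j assume "i < dim_row (msum d (\<lambda>x. C * f x) S)" and "j < dim_col (msum d (\<lambda>x. C * f x) S)"
  then have i: "i < d" and j: "j < d" by simp_all
  have "(C * msum d f S) $$ (i,j) = (\<Sum>k<d. \<Sum>x\<in>S. C $$ (i,k) * f x $$ (k,j))"
    using i j C by (simp add: scalar_prod_def sum_distrib_left atLeast0LessThan)
  also have "\<dots> = (\<Sum>x\<in>S. \<Sum>k<d. C $$ (i,k) * f x $$ (k,j))" by (rule sum.swap)
  also have "\<dots> = (\<Sum>x\<in>S. (C * f x) $$ (i,j))"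
  proof (rule sum.cong)
    fix x assume "x \<in> S"
    then show "(\<Sum>k<d. C $$ (i,k) * f x $$ (k,j)) = (C * f x) $$ (i,j)"
      using f[of x] C i j by (auto simp: scalar_prod_def atLeast0LessThan)
  qed simp
  finally show "(C * msum d f S) $$ (i,j) = msum d (\<lambda>x. C * f x) S $$ (i,j)" using i j by simp
qed (use C in auto)

lemma mtrace_msum:
  assumes "\<And>x. x \<in> S \<Longrightarrow> f x \<in> carrier_mat d d"
  shows "mtrace (msum d f S) = (\<Sum>x\<in>S. mtrace (f x))"
proof -
  have "mtrace (msum d f S) = (\<Sum>i<d. \<Sum>x\<in>S. f x $$ (i,i))" unfolding mtrace_def by simp
  also have "\<dots> = (\<Sum>x\<in>S. \<Sum>i<d. f x $$ (i,i))" by (rule sum.swap)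
  also have "\<dots> = (\<Sum>x\<in>S. mtrace (f x))" unfolding mtrace_def using assms by (auto intro!: sum.cong)
  finally show ?thesis .
qed

definition mat_unit :: "nat \<Rightarrow> nat \<Rightarrow> nat \<Rightarrow> complex mat" where
  "mat_unit d i j = mat d d (\<lambda>(a,b). if a = i \<and> b = j then 1 else 0)"

lemma mat_unit_carrier [simp]: "mat_unit d i j \<in> carrier_mat d d"
  and mat_unit_dims [simp]: "dim_row (mat_unit d i j) = d" "dim_col (mat_unit d i j) = d"
  unfolding mat_unit_def by simp_all

lemma mtrace_mat_unit: "i < d \<Longrightarrow> j < d \<Longrightarrow> mtrace (mat_unit d i j) = (if i = j then 1 else 0)"
  unfolding mtrace_def mat_unit_def by simp

lemma mat_unit_sandwich_index:
  assumes B: "B \<in> carrier_mat d d" and C: "C \<in> carrier_mat d d"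
    and i: "i < d" and j: "j < d" and a: "a < d" and b: "b < d"
  shows "(B * mat_unit d i j * C) $$ (a,b) = B $$ (a,i) * C $$ (j,b)"
proof -
  have BE: "(B * mat_unit d i j) $$ (a,k) = (if k = j then B $$ (a,i) else 0)" if k: "k < d" for k
  proof -
    have "(B * mat_unit d i j) $$ (a,k) = (\<Sum>l<d. B $$ (a,l) * (if l = i \<and> k = j then 1 else 0))"
      using B a k by (simp add: scalar_prod_def mat_unit_def atLeast0LessThan)
    also have "\<dots> = (\<Sum>l<d. if l = i then (if k = j then B $$ (a,l) else 0) else 0)"
      by (rule sum.cong) auto
    finally show ?thesis using i by simp
  qed
  have "(B * mat_unit d i j * C) $$ (a,b) = (\<Sum>k<d. (B * mat_unit d i j) $$ (a,k) * C $$ (k,b))"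
    using B C a b by (auto simp: scalar_prod_def atLeast0LessThan intro!: sum.cong)
  also have "\<dots> = (\<Sum>k<d. if k = j then B $$ (a,i) * C $$ (k,b) else 0)"
    by (rule sum.cong) (simp_all add: BE)
  finally show ?thesis using j by simp
qed

lemma msum_mat_unit_diag:
  assumes Y: "\<And>n. n \<in> N \<Longrightarrow> Y n \<in> carrier_mat d d" and Z: "\<And>n. n \<in> N \<Longrightarrow> Z n \<in> carrier_mat d d"
  shows "(\<Sum>i<d. \<Sum>j<d. msum d (\<lambda>n. Y n * mat_unit d i j * Z n) N $$ (i,j))
       = (\<Sum>n\<in>N. mtrace (Y n) * mtrace (Z n))"
proof -
  have "(\<Sum>i<d. \<Sum>j<d. msum d (\<lambda>n. Y n * mat_unit d i j * Z n) N $$ (i,j))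
      = (\<Sum>i<d. \<Sum>j<d. \<Sum>n\<in>N. Y n $$ (i,i) * Z n $$ (j,j))"
    using mat_unit_sandwich_index[OF Y Z] by simp
  also have "\<dots> = (\<Sum>i<d. \<Sum>n\<in>N. \<Sum>j<d. Y n $$ (i,i) * Z n $$ (j,j))"
    by (rule sum.cong[OF refl], rule sum.swap)
  also have "\<dots> = (\<Sum>n\<in>N. \<Sum>i<d. \<Sum>j<d. Y n $$ (i,i) * Z n $$ (j,j))"
    by (rule sum.swap)
  also have "\<dots> = (\<Sum>n\<in>N. mtrace (Y n) * mtrace (Z n))"
    unfolding mtrace_def using Y Z by (auto simp: sum_product intro!: sum.cong)
  finally show ?thesis .
qed

section \<open>Irreducible representations\<close>

definition rep_invariant_subspace :: "nat \<Rightarrow> 'a set \<Rightarrow> ('a \<Rightarrow> complex mat) \<Rightarrow> complex vec set \<Rightarrow> bool" where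
  "rep_invariant_subspace d N X W \<longleftrightarrow> W \<subseteq> carrier_vec d \<and> 0\<^sub>v d \<in> W \<and> (\<forall>v\<in>W. \<forall>w\<in>W. v + w \<in> W) \<and>
     (\<forall>c. \<forall>v\<in>W. c \<cdot>\<^sub>v v \<in> W) \<and> (\<forall>n\<in>N. \<forall>w\<in>W. X n *\<^sub>v w \<in> W)"

lemma irr_rep_iff:
  "irr_rep G N d X \<longleftrightarrow> is_rep G N d X \<and> d > 0 \<and>
     (\<forall>W. rep_invariant_subspace d N X W \<longrightarrow> W = {0\<^sub>v d} \<or> W = carrier_vec d)"
  unfolding irr_rep_def rep_invariant_subspace_def by blast

lemma is_repD:
  assumes "is_rep G N d X"
  shows is_rep_carrier: "\<And>n. n \<in> N \<Longrightarrow> X n \<in> carrier_mat d d"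
    and is_rep_one: "X \<one>\<^bsub>G\<^esub> = 1\<^sub>m d"
    and is_rep_mult: "\<And>x y. x \<in> N \<Longrightarrow> y \<in> N \<Longrightarrow> X (x \<otimes>\<^bsub>G\<^esub> y) = X x * X y"
  using assms unfolding is_rep_def by auto

lemma irr_repD:
  assumes "irr_rep G N d X"
  shows irr_rep_is_rep: "is_rep G N d X" and irr_rep_dim_pos: "d > 0"
    and irr_rep_invariant_trivial:
      "\<And>W. rep_invariant_subspace d N X W \<Longrightarrow> W = {0\<^sub>v d} \<or> W = carrier_vec d"
  using assms unfolding irr_rep_iff by simp_all

lemma is_rep_inverse_mats:
  assumes G: "group G" and N: "subgroup N G" and X: "is_rep G N d X" and n: "n \<in> N"
  shows "inverse_mats d (X n) (X (inv\<^bsub>G\<^esub> n))"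
proof -
  have ni: "inv\<^bsub>G\<^esub> n \<in> N" using subgroup.m_inv_closed[OF N n] .
  have nc: "n \<in> carrier G" using subgroup.subset[OF N] n by blast
  have "X n * X (inv\<^bsub>G\<^esub> n) = X (n \<otimes>\<^bsub>G\<^esub> inv\<^bsub>G\<^esub> n)"
    and "X (inv\<^bsub>G\<^esub> n) * X n = X (inv\<^bsub>G\<^esub> n \<otimes>\<^bsub>G\<^esub> n)"
    using is_rep_mult[OF X n ni] is_rep_mult[OF X ni n] by simp_all
  then show ?thesis
    using n ni is_rep_one[OF X] is_rep_carrier[OF X] group.r_inv[OF G nc] group.l_inv[OF G nc]
    unfolding inverse_mats_def by simp
qed

lemma intertwiner_equalizer_invariant:
  assumes A: "A \<in> carrier_mat d' d" and B: "B \<in> carrier_mat d' d"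
    and X: "\<And>n. n \<in> N \<Longrightarrow> X n \<in> carrier_mat d d" and Y: "\<And>n. n \<in> N \<Longrightarrow> Y n \<in> carrier_mat d' d'"
    and A_int: "\<And>n. n \<in> N \<Longrightarrow> A * X n = Y n * A" and B_int: "\<And>n. n \<in> N \<Longrightarrow> B * X n = Y n * B"
  shows "rep_invariant_subspace d N X {v \<in> carrier_vec d. A *\<^sub>v v = B *\<^sub>v v}"
proof -
  have "A *\<^sub>v (X n *\<^sub>v v) = B *\<^sub>v (X n *\<^sub>v v)"
    if n: "n \<in> N" and v: "v \<in> carrier_vec d" and eq: "A *\<^sub>v v = B *\<^sub>v v" for n v
  proof -
    have "A *\<^sub>v (X n *\<^sub>v v) = Y n *\<^sub>v (A *\<^sub>v v)"
      using A X[OF n] Y[OF n] v A_int[OF n] by (metis assoc_mult_mat_vec)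
    also have "\<dots> = B *\<^sub>v (X n *\<^sub>v v)"
      using B X[OF n] Y[OF n] v B_int[OF n] eq by (metis assoc_mult_mat_vec)
    finally show ?thesis .
  qed
  moreover have "X n *\<^sub>v v \<in> carrier_vec d" if "n \<in> N" and "v \<in> carrier_vec d" for n v
    using X[OF that(1)] that(2) by simp
  ultimately show ?thesis
    unfolding rep_invariant_subspace_def using A B
    by (auto simp: mult_add_distrib_mat_vec mult_mat_vec)
qed

lemma rep_invariant_subspace_preimage:
  assumes W: "rep_invariant_subspace d N Y W" and T: "T \<in> carrier_mat d d"
    and X: "\<And>n. n \<in> N \<Longrightarrow> X n \<in> carrier_mat d d" and Y: "\<And>n. n \<in> N \<Longrightarrow> Y n \<in> carrier_mat d d"
    and int: "\<And>n. n \<in> N \<Longrightarrow> T * X n = Y n * T"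
  shows "rep_invariant_subspace d N X {v \<in> carrier_vec d. T *\<^sub>v v \<in> W}"
proof -
  have W0: "0\<^sub>v d \<in> W" and Wadd: "\<And>v w. v \<in> W \<Longrightarrow> w \<in> W \<Longrightarrow> v + w \<in> W"
    and Wsmult: "\<And>c v. v \<in> W \<Longrightarrow> c \<cdot>\<^sub>v v \<in> W"
    and Winv: "\<And>n w. n \<in> N \<Longrightarrow> w \<in> W \<Longrightarrow> Y n *\<^sub>v w \<in> W"
    using W unfolding rep_invariant_subspace_def by blast+
  have "T *\<^sub>v (X n *\<^sub>v v) \<in> W" if n: "n \<in> N" and v: "v \<in> carrier_vec d" "T *\<^sub>v v \<in> W" for n v
  proof -
    have "T *\<^sub>v (X n *\<^sub>v v) = (T * X n) *\<^sub>v v" using T X[OF n] v by simp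
    also have "\<dots> = Y n *\<^sub>v (T *\<^sub>v v)" unfolding int[OF n] using T Y[OF n] v by simp
    finally show ?thesis using Winv n v by simp
  qed
  moreover have "X n *\<^sub>v v \<in> carrier_vec d" if "n \<in> N" and "v \<in> carrier_vec d" for n v
    using X[OF that(1)] that(2) by simp
  ultimately show ?thesis
    unfolding rep_invariant_subspace_def using T mult_mat_vec_zero[OF T] W0 Wadd Wsmult
    by (auto simp: mult_add_distrib_mat_vec mult_mat_vec)
qed

lemma irr_rep_commutant_scalar:
  assumes irr: "irr_rep G N d X" and C: "C \<in> carrier_mat d d"
    and comm: "\<And>n. n \<in> N \<Longrightarrow> C * X n = X n * C"
  shows "\<exists>c. C = c \<cdot>\<^sub>m 1\<^sub>m d"
proof -
  note X = is_rep_carrier[OF irr_rep_is_rep[OF irr]]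
  obtain ev where "ev \<in> spectrum C" using spectrum_non_empty[OF C irr_rep_dim_pos[OF irr]] by blast
  then obtain v0 where v0: "v0 \<in> carrier_vec d" "v0 \<noteq> 0\<^sub>v d" "C *\<^sub>v v0 = ev \<cdot>\<^sub>v v0"
    using C unfolding spectrum_def eigenvalue_def eigenvector_def by auto
  let ?W = "{v \<in> carrier_vec d. C *\<^sub>v v = (ev \<cdot>\<^sub>m 1\<^sub>m d) *\<^sub>v v}"
  have scalar_comm: "(ev \<cdot>\<^sub>m 1\<^sub>m d) * X n = X n * (ev \<cdot>\<^sub>m 1\<^sub>m d)" if "n \<in> N" for n
    using X[OF that] mult_smult_assoc_mat[of "1\<^sub>m d" d d "X n" d] mult_smult_distrib[of "X n" d d "1\<^sub>m d" d]
    by simp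
  have "rep_invariant_subspace d N X ?W"
    by (rule intertwiner_equalizer_invariant[OF C _ X X comm scalar_comm]) auto
  moreover have "(ev \<cdot>\<^sub>m 1\<^sub>m d) *\<^sub>v v0 = ev \<cdot>\<^sub>v v0" using v0(1) by auto
  then have "v0 \<in> ?W" using v0 by simp
  then have "?W \<noteq> {0\<^sub>v d}" using v0(2) by blast
  ultimately have "?W = carrier_vec d" using irr_rep_invariant_trivial[OF irr] by blast
  then have "C = ev \<cdot>\<^sub>m 1\<^sub>m d" by (intro mat_eq_by_mult_vec[OF C]) auto
  then show ?thesis ..
qed

lemma irr_rep_intertwiner_invertible:
  assumes irr: "irr_rep G N d X" and Y: "\<And>n. n \<in> N \<Longrightarrow> Y n \<in> carrier_mat d d"
    and T: "T \<in> carrier_mat d d" and int: "\<And>n. n \<in> N \<Longrightarrow> T * X n = Y n * T"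
    and nz: "T \<noteq> 0\<^sub>m d d"
  obtains Ti where "inverse_mats d T Ti"
proof -
  note X = is_rep_carrier[OF irr_rep_is_rep[OF irr]]
  let ?W = "{v \<in> carrier_vec d. T *\<^sub>v v = 0\<^sub>m d d *\<^sub>v v}"
  have zero_int: "0\<^sub>m d d * X n = Y n * 0\<^sub>m d d" if "n \<in> N" for n
    using X[OF that] Y[OF that] by simp
  have "rep_invariant_subspace d N X ?W"
    by (rule intertwiner_equalizer_invariant[OF T _ X Y int zero_int]) auto
  moreover have "?W \<noteq> carrier_vec d"
  proof
    assume "?W = carrier_vec d"
    then have "T = 0\<^sub>m d d" by (intro mat_eq_by_mult_vec[OF T]) auto
    with nz show False ..
  qed
  ultimately have W0: "?W = {0\<^sub>v d}" using irr_rep_invariant_trivial[OF irr] by blast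
  have "T *\<^sub>v v \<noteq> 0\<^sub>v d" if "v \<in> carrier_vec d" and "v \<noteq> 0\<^sub>v d" for v
  proof
    assume "T *\<^sub>v v = 0\<^sub>v d"
    then have "v \<in> ?W" using that(1) zero_mat_mult_vec[OF that(1)] by simp
    with W0 that(2) show False by blast
  qed
  then have "det T \<noteq> 0" using det_0_iff_vec_prod_zero_field[OF T] by blast
  from det_non_zero_imp_unit[OF T this, of "()"]
  obtain Ti where "Ti \<in> carrier_mat d d" "Ti * T = 1\<^sub>m d" "T * Ti = 1\<^sub>m d"
    unfolding Units_def ring_mat_simps by blast
  then show thesis using that T unfolding inverse_mats_def by blast
qed

lemma irr_rep_similar:
  assumes irr: "irr_rep G N d X" and Y: "is_rep G N d Y" and T: "inverse_mats d T Ti"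
    and int: "\<And>n. n \<in> N \<Longrightarrow> T * X n = Y n * T"
  shows "irr_rep G N d Y"
proof -
  have Tc: "T \<in> carrier_mat d d" and Tic: "Ti \<in> carrier_mat d d"
    using T unfolding inverse_mats_def by simp_all
  note TTi_vec = inverse_mats_mult_vec[OF T]
  have "W = {0\<^sub>v d} \<or> W = carrier_vec d" if W: "rep_invariant_subspace d N Y W" for W
  proof -
    have Wc: "W \<subseteq> carrier_vec d" and W0: "0\<^sub>v d \<in> W"
      using W unfolding rep_invariant_subspace_def by blast+
    let ?V = "{v \<in> carrier_vec d. T *\<^sub>v v \<in> W}"
    have "rep_invariant_subspace d N X ?V"
      using rep_invariant_subspace_preimage[OF W Tc is_rep_carrier[OF irr_rep_is_rep[OF irr]]
          is_rep_carrier[OF Y] int] .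
    then consider "?V = {0\<^sub>v d}" | "?V = carrier_vec d"
      using irr_rep_invariant_trivial[OF irr] by blast
    then show ?thesis
    proof cases
      case 1
      have "w = 0\<^sub>v d" if w: "w \<in> W" for w
      proof -
        have wc: "w \<in> carrier_vec d" using Wc w by blast
        then have "Ti *\<^sub>v w \<in> ?V" using Tic TTi_vec w by simp
        then have "Ti *\<^sub>v w = 0\<^sub>v d" using 1 by blast
        then show ?thesis using TTi_vec[OF wc] mult_mat_vec_zero[OF Tc] by simp
      qed
      then show ?thesis using W0 by blast
    next
      case 2
      have "w \<in> W" if "w \<in> carrier_vec d" for w
      proof -
        have "Ti *\<^sub>v w \<in> ?V" using 2 Tic that by simp
        then show ?thesis using TTi_vec[OF that] by simp
      qed
      then show ?thesis using Wc by blast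
    qed
  qed
  then show ?thesis using irr Y unfolding irr_rep_iff by blast
qed

lemma (in group) mult_inv_cancel_left [simp]:
  "x \<in> carrier G \<Longrightarrow> y \<in> carrier G \<Longrightarrow> x \<otimes> (inv x \<otimes> y) = y"
  by (simp add: m_assoc[symmetric])

lemma (in group) inv_mult_cancel_left [simp]:
  "x \<in> carrier G \<Longrightarrow> y \<in> carrier G \<Longrightarrow> inv x \<otimes> (x \<otimes> y) = y"
  by (simp add: m_assoc[symmetric])

lemma (in group) bij_betw_mult_left_subgroup:
  assumes N: "subgroup N G" and m: "m \<in> N"
  shows "bij_betw (\<lambda>n. m \<otimes> n) N N"
proof (rule bij_betw_byWitness[where f' = "\<lambda>n. inv m \<otimes> n"])
  have Nc: "\<And>x. x \<in> N \<Longrightarrow> x \<in> carrier G" using subgroup.subset[OF N] by blast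
  show "\<forall>a\<in>N. inv m \<otimes> (m \<otimes> a) = a" and "\<forall>a\<in>N. m \<otimes> (inv m \<otimes> a) = a"
    using Nc m by simp_all
  show "(\<lambda>n. m \<otimes> n) ` N \<subseteq> N" and "(\<lambda>n. inv m \<otimes> n) ` N \<subseteq> N"
    using subgroup.m_closed[OF N] subgroup.m_inv_closed[OF N] m by auto
qed

lemma msum_conj_intertwines:
  assumes G: "group G" and N: "subgroup N G" and Y: "is_rep G N d Y" and X: "is_rep G N d X"
    and A: "A \<in> carrier_mat d d" and m: "m \<in> N"
  shows "msum d (\<lambda>n. Y n * A * X (inv\<^bsub>G\<^esub> n)) N * X m = Y m * msum d (\<lambda>n. Y n * A * X (inv\<^bsub>G\<^esub> n)) N"
proof -
  interpret group G by fact
  have Nc: "\<And>x. x \<in> N \<Longrightarrow> x \<in> carrier G" using subgroup.subset[OF N] by blast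
  have Ni: "\<And>x. x \<in> N \<Longrightarrow> inv\<^bsub>G\<^esub> x \<in> N" using subgroup.m_inv_closed[OF N] by blast
  note Yc = is_rep_carrier[OF Y] and Xc = is_rep_carrier[OF X]
  let ?f = "\<lambda>n. Y n * A * X (inv\<^bsub>G\<^esub> n)"
  let ?g = "\<lambda>n. Y n * A * X (inv\<^bsub>G\<^esub> n \<otimes>\<^bsub>G\<^esub> m)"
  have fc: "\<And>n. n \<in> N \<Longrightarrow> ?f n \<in> carrier_mat d d" using Yc Xc Ni A by (meson mult_carrier_mat)
  have "msum d ?f N * X m = msum d (\<lambda>n. ?f n * X m) N"
    by (rule msum_mult_right[OF fc Xc[OF m]])
  also have "\<dots> = msum d ?g N"
  proof (rule msum_cong)
    fix n assume n: "n \<in> N"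
    show "?f n * X m = ?g n"
      using Yc[OF n] A Xc[OF Ni[OF n]] Xc[OF m] is_rep_mult[OF X Ni[OF n] m]
      by (simp add: assoc_mult_mat[of _ d d _ d _ d])
  qed
  also have "\<dots> = msum d (\<lambda>n. ?g (m \<otimes>\<^bsub>G\<^esub> n)) N"
    by (rule msum_reindex[OF bij_betw_mult_left_subgroup[OF N m], symmetric])
  also have "\<dots> = msum d (\<lambda>n. Y m * ?f n) N"
  proof (rule msum_cong)
    fix n assume n: "n \<in> N"
    have "inv\<^bsub>G\<^esub> (m \<otimes>\<^bsub>G\<^esub> n) \<otimes>\<^bsub>G\<^esub> m = inv\<^bsub>G\<^esub> n"
      using Nc[OF n] Nc[OF m] by (simp add: inv_mult_group m_assoc)
    then show "?g (m \<otimes>\<^bsub>G\<^esub> n) = Y m * ?f n"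
      using is_rep_mult[OF Y m n] Yc[OF m] Yc[OF n] A Xc[OF Ni[OF n]]
      by (simp add: assoc_mult_mat[of _ d d _ d _ d])
  qed
  also have "\<dots> = Y m * msum d ?f N"
    by (rule msum_mult_left[OF fc Yc[OF m], symmetric])
  finally show ?thesis .
qed

lemma irr_rep_mtrace_norm:
  assumes G: "group G" and N: "subgroup N G" and irr: "irr_rep G N d X"
  shows "(\<Sum>n\<in>N. mtrace (X n) * mtrace (X (inv\<^bsub>G\<^esub> n))) = of_nat (card N)"
proof -
  have d: "d > 0" and rep: "is_rep G N d X" using irr by (simp_all add: irr_rep_dim_pos irr_rep_is_rep)
  note Xc = is_rep_carrier[OF rep]
  have Ni: "\<And>x. x \<in> N \<Longrightarrow> inv\<^bsub>G\<^esub> x \<in> N" using subgroup.m_inv_closed[OF N] by blast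
  define S where "S i j = msum d (\<lambda>n. X n * mat_unit d i j * X (inv\<^bsub>G\<^esub> n)) N" for i j
  \<comment> \<open>Each S i j commutes with X, so it is scalar, and its trace determines it.\<close>
  have S_entry: "S i j $$ (i,j) = (if i = j then of_nat (card N) / of_nat d else 0)"
    if i: "i < d" and j: "j < d" for i j
  proof -
    obtain c where c: "S i j = c \<cdot>\<^sub>m 1\<^sub>m d"
      using irr_rep_commutant_scalar[OF irr, of "S i j"] msum_conj_intertwines[OF G N rep rep]
      unfolding S_def by auto
    have "mtrace (S i j) = (\<Sum>n\<in>N. mtrace (X n * mat_unit d i j * X (inv\<^bsub>G\<^esub> n)))"
      unfolding S_def by (rule mtrace_msum) (use Xc Ni in \<open>meson mat_unit_carrier mult_carrier_mat\<close>)
    also have "\<dots> = (\<Sum>n\<in>N. mtrace (mat_unit d i j))"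
      using is_rep_inverse_mats[OF G N rep] by (intro sum.cong refl mtrace_conj) auto
    also have "\<dots> = of_nat (card N) * (if i = j then 1 else 0)"
      using mtrace_mat_unit[OF i j] by simp
    moreover have "mtrace (S i j) = c * of_nat d"
      using c mtrace_smult[of "1\<^sub>m d" d c] by simp
    ultimately have "c * of_nat d = of_nat (card N) * (if i = j then 1 else 0)" by simp
    then have "c = of_nat (card N) * (if i = j then 1 else 0) / of_nat d"
      using d by (simp add: eq_divide_eq)
    then show ?thesis using c i j by simp
  qed
  have "(\<Sum>n\<in>N. mtrace (X n) * mtrace (X (inv\<^bsub>G\<^esub> n))) = (\<Sum>i<d. \<Sum>j<d. S i j $$ (i,j))"
    unfolding S_def by (rule msum_mat_unit_diag[symmetric]) (use Xc Ni in auto)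
  also have "\<dots> = (\<Sum>i<d. of_nat (card N) / of_nat d)"
    by (rule sum.cong[OF refl]) (simp add: S_entry)
  also have "\<dots> = of_nat (card N)" using d by simp
  finally show ?thesis .
qed

lemma irr_rep_equiv_if_mtrace_eq:
  assumes G: "group G" and N: "subgroup N G" and fin: "finite N" and irr: "irr_rep G N d X"
    and Y: "is_rep G N d Y" and tr: "\<And>n. n \<in> N \<Longrightarrow> mtrace (Y n) = mtrace (X n)"
  obtains T Ti where "inverse_mats d T Ti" and "\<And>n. n \<in> N \<Longrightarrow> T * X n = Y n * T"
proof -
  have rep: "is_rep G N d X" using irr by (rule irr_rep_is_rep)
  note Xc = is_rep_carrier[OF rep] and Yc = is_rep_carrier[OF Y]
  have Ni: "\<And>x. x \<in> N \<Longrightarrow> inv\<^bsub>G\<^esub> x \<in> N" using subgroup.m_inv_closed[OF N] by blast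
  define S where "S i j = msum d (\<lambda>n. Y n * mat_unit d i j * X (inv\<^bsub>G\<^esub> n)) N" for i j
  \<comment> \<open>The intertwiners S i j cannot all vanish: their diagonal entries add up to card N.\<close>
  have "(\<Sum>i<d. \<Sum>j<d. S i j $$ (i,j)) = (\<Sum>n\<in>N. mtrace (Y n) * mtrace (X (inv\<^bsub>G\<^esub> n)))"
    unfolding S_def by (rule msum_mat_unit_diag) (use Yc Xc Ni in auto)
  also have "\<dots> = of_nat (card N)"
    using irr_rep_mtrace_norm[OF G N irr] tr by simp
  also have "\<dots> \<noteq> 0" using fin subgroup.one_closed[OF N] by auto
  finally obtain i j where i: "i < d" and j: "j < d" and nz: "S i j $$ (i,j) \<noteq> 0"
    by (metis (no_types, lifting) lessThan_iff sum.neutral)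
  have S_nz: "S i j \<noteq> 0\<^sub>m d d" using nz i j by auto
  have S_int: "S i j * X n = Y n * S i j" if "n \<in> N" for n
    unfolding S_def using msum_conj_intertwines[OF G N Y rep _ that] by simp
  have "S i j \<in> carrier_mat d d" unfolding S_def by simp
  then obtain Ti where "inverse_mats d (S i j) Ti"
    using irr_rep_intertwiner_invertible[OF irr Yc _ S_int S_nz] by blast
  then show thesis using that S_int by blast
qed

lemma irr_rep_if_irr_char:
  assumes G: "group G" and N: "subgroup N G" and fin: "finite N" and irr: "irr_char G N \<theta>"
    and P: "is_rep G N d P" and tr: "\<And>n. n \<in> N \<Longrightarrow> \<theta> n = mtrace (P n)"
  shows "irr_rep G N d P"
proof -
  obtain d0 X where X: "irr_rep G N d0 X" and trX: "\<And>n. n \<in> N \<Longrightarrow> \<theta> n = mtrace (X n)"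
    using irr unfolding irr_char_def by blast
  have "of_nat d0 = (of_nat d :: complex)"
    using trX[OF subgroup.one_closed[OF N]] tr[OF subgroup.one_closed[OF N]]
      is_rep_one[OF irr_rep_is_rep[OF X]] is_rep_one[OF P] by simp
  then have X_d: "irr_rep G N d X" using X by simp
  obtain T Ti where "inverse_mats d T Ti" and "\<And>n. n \<in> N \<Longrightarrow> T * X n = P n * T"
    using irr_rep_equiv_if_mtrace_eq[OF G N fin X_d P] trX tr by metis
  then show ?thesis using irr_rep_similar[OF X_d P] by blast
qed

lemma irr_rep_intertwiners_proportional:
  assumes irr: "irr_rep G N d X" and Y: "\<And>n. n \<in> N \<Longrightarrow> Y n \<in> carrier_mat d d"
    and A: "A \<in> carrier_mat d d" and B: "inverse_mats d B Bi"
    and A_int: "\<And>n. n \<in> N \<Longrightarrow> A * X n = Y n * A" and B_int: "\<And>n. n \<in> N \<Longrightarrow> B * X n = Y n * B"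
  obtains c where "A = c \<cdot>\<^sub>m B"
proof -
  note X = is_rep_carrier[OF irr_rep_is_rep[OF irr]]
  have Bc: "B \<in> carrier_mat d d" and Bic: "Bi \<in> carrier_mat d d"
    using B unfolding inverse_mats_def by simp_all
  have "Bi * A * X n = X n * (Bi * A)" if n: "n \<in> N" for n
  proof -
    have "X n = Bi * Y n * B" by (rule inverse_mats_conj_swap(1)[OF B X[OF n] Y[OF n] B_int[OF n]])
    then have XBi: "X n * Bi = Bi * Y n"
      using inverse_mats_cancel_right(1)[OF B, of "Bi * Y n" d] Bic Y[OF n] by simp
    have "Bi * A * X n = Bi * (Y n * A)"
      using A_int[OF n] A Bic X[OF n] by (simp add: assoc_mult_mat[of _ d d _ d _ d])
    also have "\<dots> = X n * Bi * A"
      unfolding XBi using A Bic Y[OF n] by (simp add: assoc_mult_mat[of _ d d _ d _ d])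
    finally show ?thesis using A Bic X[OF n] by (simp add: assoc_mult_mat[of _ d d _ d _ d])
  qed
  then obtain c where c: "Bi * A = c \<cdot>\<^sub>m 1\<^sub>m d"
    using irr_rep_commutant_scalar[OF irr, of "Bi * A"] A Bic by auto
  have "A = B * (Bi * A)" using inverse_mats_cancel(1)[OF B A] by simp
  also have "\<dots> = c \<cdot>\<^sub>m B" unfolding c using Bc by (simp add: mult_smult_distrib[of _ d d _ d])
  finally show thesis by (rule that)
qed

lemma irr_rep_conj_eq:
  assumes irr: "irr_rep G N d X" and M1: "inverse_mats d M1 Mi1" and M2: "inverse_mats d M2 Mi2"
    and eq: "\<And>n. n \<in> N \<Longrightarrow> Mi1 * X n * M1 = Mi2 * X n * M2" and A: "A \<in> carrier_mat d d"
  shows "Mi1 * A * M1 = Mi2 * A * M2"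
proof -
  note X = is_rep_carrier[OF irr_rep_is_rep[OF irr]]
  have c1: "M1 \<in> carrier_mat d d" "Mi1 \<in> carrier_mat d d" "M1 * Mi1 = 1\<^sub>m d" "Mi1 * M1 = 1\<^sub>m d"
    and c2: "M2 \<in> carrier_mat d d" "Mi2 \<in> carrier_mat d d" "M2 * Mi2 = 1\<^sub>m d" "Mi2 * M2 = 1\<^sub>m d"
    using M1 M2 unfolding inverse_mats_def by simp_all
  have "M2 * Mi1 * X n = X n * (M2 * Mi1)" if n: "n \<in> N" for n
  proof -
    have "M2 * Mi1 * X n = M2 * (Mi1 * X n * M1) * Mi1"
      using c1 c2 X[OF n] by (simp add: assoc_mult_mat[of _ d d _ d _ d])
    also have "\<dots> = M2 * (Mi2 * X n * M2) * Mi1" by (simp only: eq[OF n])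
    also have "\<dots> = X n * (M2 * Mi1)"
      using c1 c2 X[OF n] inverse_mats_cancel(1)[OF M2, of "X n * (M2 * Mi1)" d]
      by (simp add: assoc_mult_mat[of _ d d _ d _ d])
    finally show ?thesis .
  qed
  then obtain c where c: "M2 * Mi1 = c \<cdot>\<^sub>m 1\<^sub>m d"
    using irr_rep_commutant_scalar[OF irr, of "M2 * Mi1"] c1 c2 by auto
  have "Mi1 = Mi2 * (M2 * Mi1)" using inverse_mats_cancel(2)[OF M2 c1(2)] by simp
  then have Mi1_eq: "Mi1 = c \<cdot>\<^sub>m Mi2" unfolding c using c2 by (simp add: mult_smult_distrib[of _ d d _ d])
  have "M2 = M2 * Mi1 * M1" using inverse_mats_cancel_right(2)[OF M1, of M2] c2 by simp
  then have M2_eq: "M2 = c \<cdot>\<^sub>m M1" unfolding c using c1 by (simp add: mult_smult_assoc_mat[of _ d d _ d])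
  show ?thesis
    unfolding Mi1_eq M2_eq using c1 c2 A
    by (simp add: mult_smult_assoc_mat[of _ d d _ d] mult_smult_distrib[of _ d d _ d])
qed

section \<open>The field Q^ab and its automorphisms\<close>

lemma Qab_closed:
  shows Qab_zero: "0 \<in> Qab" and Qab_one: "1 \<in> Qab"
    and Qab_add: "x \<in> Qab \<Longrightarrow> y \<in> Qab \<Longrightarrow> x + y \<in> Qab"
    and Qab_mult: "x \<in> Qab \<Longrightarrow> y \<in> Qab \<Longrightarrow> x * y \<in> Qab"
  unfolding Qab_def by auto

lemma Qab_sum: "(\<And>x. x \<in> S \<Longrightarrow> f x \<in> Qab) \<Longrightarrow> sum f S \<in> Qab"
  by (induction S rule: infinite_finite_induct) (simp_all add: Qab_zero Qab_add)

lemma elements_mat_Qab_index: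
  "elements_mat A \<subseteq> Qab \<Longrightarrow> i < dim_row A \<Longrightarrow> j < dim_col A \<Longrightarrow> A $$ (i,j) \<in> Qab"
  by (blast intro: elements_matI[OF carrier_matI[OF refl refl]])

lemma mtrace_Qab: "A \<in> carrier_mat d d \<Longrightarrow> elements_mat A \<subseteq> Qab \<Longrightarrow> mtrace A \<in> Qab"
  unfolding mtrace_def by (auto intro!: Qab_sum elements_mat_Qab_index)

context
  fixes \<sigma> assumes \<sigma>: "\<sigma> \<in> GalQab"
begin

lemma GalQab_add: "x \<in> Qab \<Longrightarrow> y \<in> Qab \<Longrightarrow> \<sigma> (x + y) = \<sigma> x + \<sigma> y"
  and GalQab_mult: "x \<in> Qab \<Longrightarrow> y \<in> Qab \<Longrightarrow> \<sigma> (x * y) = \<sigma> x * \<sigma> y"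
  and GalQab_inj: "inj_on \<sigma> Qab"
  using \<sigma> unfolding GalQab_def by (auto simp: bij_betw_def)

lemma GalQab_zero: "\<sigma> 0 = 0"
  using GalQab_add[OF Qab_zero Qab_zero] by simp

lemma GalQab_eq_zero_iff: "x \<in> Qab \<Longrightarrow> \<sigma> x = 0 \<longleftrightarrow> x = 0"
  using inj_onD[OF GalQab_inj _ _ Qab_zero] GalQab_zero by auto

lemma GalQab_one: "\<sigma> 1 = 1"
  using GalQab_mult[OF Qab_one Qab_one] GalQab_eq_zero_iff[OF Qab_one] by simp

lemma GalQab_sum: "(\<And>x. x \<in> S \<Longrightarrow> f x \<in> Qab) \<Longrightarrow> \<sigma> (sum f S) = (\<Sum>x\<in>S. \<sigma> (f x))"
  by (induction S rule: infinite_finite_induct) (simp_all add: GalQab_zero GalQab_add Qab_sum)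

lemma map_mat_GalQab_mult:
  assumes A: "A \<in> carrier_mat n m" and B: "B \<in> carrier_mat m k"
    and qA: "elements_mat A \<subseteq> Qab" and qB: "elements_mat B \<subseteq> Qab"
  shows "map_mat \<sigma> (A * B) = map_mat \<sigma> A * map_mat \<sigma> B"
proof (rule eq_matI)
  fix i j assume "i < dim_row (map_mat \<sigma> A * map_mat \<sigma> B)" and "j < dim_col (map_mat \<sigma> A * map_mat \<sigma> B)"
  then have i: "i < n" and j: "j < k" using A B by auto
  have entries: "A $$ (i,l) \<in> Qab" "B $$ (l,j) \<in> Qab" if "l < m" for l
    using elements_mat_Qab_index[OF qA] elements_mat_Qab_index[OF qB] A B i j that by auto
  have "map_mat \<sigma> (A * B) $$ (i,j) = \<sigma> (\<Sum>l<m. A $$ (i,l) * B $$ (l,j))"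
    using A B i j by (simp add: scalar_prod_def atLeast0LessThan)
  also have "\<dots> = (\<Sum>l<m. \<sigma> (A $$ (i,l) * B $$ (l,j)))"
    by (rule GalQab_sum) (simp add: entries Qab_mult)
  also have "\<dots> = (\<Sum>l<m. \<sigma> (A $$ (i,l)) * \<sigma> (B $$ (l,j)))"
    by (rule sum.cong) (simp_all add: entries GalQab_mult)
  also have "\<dots> = (map_mat \<sigma> A * map_mat \<sigma> B) $$ (i,j)"
    using A B i j by (simp add: scalar_prod_def atLeast0LessThan)
  finally show "map_mat \<sigma> (A * B) $$ (i,j) = (map_mat \<sigma> A * map_mat \<sigma> B) $$ (i,j)" .
qed (use A B in auto)

lemma map_mat_GalQab_one: "map_mat \<sigma> (1\<^sub>m d) = 1\<^sub>m d"
  by (rule eq_matI) (auto simp: GalQab_zero GalQab_one)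

lemma mtrace_map_mat_GalQab:
  assumes "A \<in> carrier_mat d d" and "elements_mat A \<subseteq> Qab"
  shows "mtrace (map_mat \<sigma> A) = \<sigma> (mtrace A)"
proof -
  have "\<sigma> (mtrace A) = (\<Sum>i<d. \<sigma> (A $$ (i,i)))"
    unfolding mtrace_def using assms by (simp, intro GalQab_sum) (auto intro: elements_mat_Qab_index)
  then show ?thesis using assms(1) unfolding mtrace_def by simp
qed

lemma map_mat_GalQab_eq_zero:
  assumes A: "A \<in> carrier_mat n m" and q: "elements_mat A \<subseteq> Qab" and z: "map_mat \<sigma> A = 0\<^sub>m n m"
  shows "A = 0\<^sub>m n m"
proof (rule eq_matI)
  fix i j assume "i < dim_row (0\<^sub>m n m)" "j < dim_col (0\<^sub>m n m)"
  then have i: "i < n" and j: "j < m" by auto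
  have "\<sigma> (A $$ (i,j)) = 0" using arg_cong[OF z, of "\<lambda>M. M $$ (i,j)"] A i j by simp
  then show "A $$ (i,j) = 0\<^sub>m n m $$ (i,j)"
    using GalQab_eq_zero_iff elements_mat_Qab_index[OF q] A i j by auto
qed (use A in auto)

end

section \<open>Projective representations associated with an irreducible character\<close>

lemma pstabD:
  assumes "(h, \<sigma>) \<in> pstab G p K N \<theta>"
  shows "h \<in> K" and "\<sigma> \<in> GalQab" and "\<And>n. n \<in> N \<Longrightarrow> \<sigma> (\<theta> (h \<otimes>\<^bsub>G\<^esub> n \<otimes>\<^bsub>G\<^esub> inv\<^bsub>G\<^esub> h)) = \<theta> n"
  using assms unfolding pstab_def HGal_def by auto

lemma id_HGal: "id \<in> HGal p"
proof -
  have "id \<in> GalQab" unfolding GalQab_def by (auto simp: bij_betw_def)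
  then show ?thesis unfolding HGal_def by (auto intro: exI[of _ 0])
qed

lemma inertia_iff_pstab_id: "y \<in> inertia G K N \<theta> \<longleftrightarrow> (y, id) \<in> pstab G p K N \<theta>"
  unfolding inertia_def pstab_def using id_HGal by auto

lemma pstab_mono: "K \<subseteq> K' \<Longrightarrow> (x, \<sigma>) \<in> pstab G p K N \<theta> \<Longrightarrow> (x, \<sigma>) \<in> pstab G p K' N \<theta>"
  unfolding pstab_def by auto

locale irr_assoc_proj = group +
  fixes K N :: "'a set" and \<theta> :: "'a \<Rightarrow> complex" and d :: nat
    and P :: "'a \<Rightarrow> complex mat" and \<alpha> :: "'a \<Rightarrow> 'a \<Rightarrow> complex"
  assumes K_subgroup: "subgroup K G" and N_normal: "normal_in G K N" and N_finite: "finite N"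
    and P_assoc: "assoc_proj G (inertia G K N \<theta>) N \<theta> d P \<alpha>"
    and P_irr: "irr_rep G N d P"
    and P_Qab: "\<And>y. y \<in> inertia G K N \<theta> \<Longrightarrow> elements_mat (P y) \<subseteq> Qab"
begin

abbreviation T where "T \<equiv> inertia G K N \<theta>"

lemma N_subgroup: "subgroup N G" and N_sub_K: "N \<subseteq> K"
  and N_conj: "k \<in> K \<Longrightarrow> n \<in> N \<Longrightarrow> k \<otimes> n \<otimes> inv k \<in> N"
  using N_normal unfolding normal_in_def by auto

lemma K_carrier: "x \<in> K \<Longrightarrow> x \<in> carrier G"
  using subgroup.subset[OF K_subgroup] by blast

lemma N_carrier: "x \<in> N \<Longrightarrow> x \<in> carrier G"
  using subgroup.subset[OF N_subgroup] by blast

lemma inertia_K: "x \<in> T \<Longrightarrow> x \<in> K"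
  unfolding inertia_def by blast

lemma inertia_carrier: "x \<in> T \<Longrightarrow> x \<in> carrier G"
  using inertia_K K_carrier by blast

lemma inertia_theta: "x \<in> T \<Longrightarrow> n \<in> N \<Longrightarrow> \<theta> (x \<otimes> n \<otimes> inv x) = \<theta> n"
  unfolding inertia_def by blast

lemma P_rep: "is_rep G N d P"
  and theta_mtrace: "\<And>n. n \<in> N \<Longrightarrow> \<theta> n = mtrace (P n)"
  and P_mult_left: "\<And>n y. n \<in> N \<Longrightarrow> y \<in> T \<Longrightarrow> P (n \<otimes> y) = P n * P y"
  and P_mult_right: "\<And>n y. n \<in> N \<Longrightarrow> y \<in> T \<Longrightarrow> P (y \<otimes> n) = P y * P n"
  and P_proj: "proj_rep G T d P \<alpha>"
  using P_assoc unfolding assoc_proj_def by auto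

lemma P_carrier: "y \<in> T \<Longrightarrow> P y \<in> carrier_mat d d"
  using P_proj unfolding proj_rep_def by blast

lemma P_inverse:
  assumes "y \<in> T" obtains B where "inverse_mats d (P y) B"
  using P_proj assms P_carrier invertible_mat_inverse_mats unfolding proj_rep_def by metis

lemma P_one: "P \<one> = 1\<^sub>m d"
  using is_rep_one[OF P_rep] .

lemma d_pos: "d > 0"
  using irr_rep_dim_pos[OF P_irr] .

lemma theta_class_function:
  assumes n: "n \<in> N" and m: "m \<in> N"
  shows "\<theta> (n \<otimes> m \<otimes> inv n) = \<theta> m"
proof -
  have ni: "inv n \<in> N" using subgroup.m_inv_closed[OF N_subgroup n] .
  have nm: "n \<otimes> m \<in> N" using subgroup.m_closed[OF N_subgroup n m] .
  have "P (n \<otimes> m \<otimes> inv n) = P n * P m * P (inv n)"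
    using is_rep_mult[OF P_rep nm ni] is_rep_mult[OF P_rep n m] by simp
  then have "\<theta> (n \<otimes> m \<otimes> inv n) = mtrace (P n * P m * P (inv n))"
    using theta_mtrace subgroup.m_closed[OF N_subgroup nm ni] by simp
  also have "\<dots> = mtrace (P m)"
    using mtrace_conj[OF is_rep_inverse_mats[OF is_group N_subgroup P_rep n]] is_rep_carrier[OF P_rep m] .
  finally show ?thesis using theta_mtrace[OF m] by simp
qed

lemma inertia_mult:
  assumes x: "x \<in> T" and y: "y \<in> T"
  shows "x \<otimes> y \<in> T"
proof -
  have xK: "x \<in> K" and yK: "y \<in> K" using inertia_K x y by auto
  have "\<theta> (x \<otimes> y \<otimes> n \<otimes> inv (x \<otimes> y)) = \<theta> n" if n: "n \<in> N" for n
  proof -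
    have "x \<otimes> y \<otimes> n \<otimes> inv (x \<otimes> y) = x \<otimes> (y \<otimes> n \<otimes> inv y) \<otimes> inv x"
      using K_carrier[OF xK] K_carrier[OF yK] N_carrier[OF n] by (simp add: m_assoc inv_mult_group)
    then show ?thesis using inertia_theta x y n N_conj[OF yK n] by simp
  qed
  then show ?thesis unfolding inertia_def using subgroup.m_closed[OF K_subgroup xK yK] by blast
qed

lemma N_sub_inertia: "N \<subseteq> T"
proof
  fix n assume "n \<in> N"
  then show "n \<in> T" unfolding inertia_def using N_sub_K theta_class_function by auto
qed

lemma one_inertia: "\<one> \<in> T"
  using N_sub_inertia subgroup.one_closed[OF N_subgroup] by blast

lemma theta_Qab: "n \<in> N \<Longrightarrow> \<theta> n \<in> Qab"
  unfolding theta_mtrace using N_sub_inertia by (intro mtrace_Qab[OF P_carrier P_Qab]) auto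

lemma inertia_conj:
  assumes hs: "(h, \<sigma>) \<in> pstab G p K N \<theta>" and y: "y \<in> T"
  shows "h \<otimes> y \<otimes> inv h \<in> T"
proof -
  note hK = pstabD(1)[OF hs] and \<sigma> = pstabD(2)[OF hs] and stab = pstabD(3)[OF hs]
  have hc: "h \<in> carrier G" and yK: "y \<in> K" and yc: "y \<in> carrier G"
    using K_carrier hK inertia_K y by auto
  let ?a = "h \<otimes> y \<otimes> inv h"
  have aK: "?a \<in> K"
    using hK yK subgroup.m_closed[OF K_subgroup] subgroup.m_inv_closed[OF K_subgroup] by blast
  have "\<theta> (?a \<otimes> m \<otimes> inv ?a) = \<theta> m" if m: "m \<in> N" for m
  proof -
    define m' where "m' = inv h \<otimes> m \<otimes> h"
    have m'N: "m' \<in> N" unfolding m'_def using N_conj[OF subgroup.m_inv_closed[OF K_subgroup hK] m] hc by simp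
    have mc: "m \<in> carrier G" using N_carrier m .
    have "\<sigma> (\<theta> (?a \<otimes> m \<otimes> inv ?a)) = \<sigma> (\<theta> (h \<otimes> (y \<otimes> m' \<otimes> inv y) \<otimes> inv h))"
      unfolding m'_def using hc yc mc by (simp add: m_assoc inv_mult_group)
    also have "\<dots> = \<theta> m'" using stab N_conj[OF yK m'N] inertia_theta[OF y m'N] by simp
    also have "\<dots> = \<sigma> (\<theta> m)" using stab[OF m'N] hc mc unfolding m'_def by (simp add: m_assoc)
    finally show ?thesis
      using inj_onD[OF GalQab_inj[OF \<sigma>]] theta_Qab N_conj[OF aK m] m by blast
  qed
  then show ?thesis unfolding inertia_def using aK by blast
qed

lemma inertia_restrict: "K' \<subseteq> K \<Longrightarrow> inertia G K' N \<theta> = K' \<inter> T"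
  unfolding inertia_def by blast

lemma P_conj_carrier:
  assumes "inverse_mats d M Mi" and "y \<in> T"
  shows "Mi * P y * M \<in> carrier_mat d d"
proof -
  have "M \<in> carrier_mat d d" and "Mi \<in> carrier_mat d d" using assms(1) unfolding inverse_mats_def by simp_all
  then show ?thesis using P_carrier[OF assms(2)] by simp
qed

lemma P_conj_nonzero:
  assumes M: "inverse_mats d M Mi" and y: "y \<in> T"
  shows "Mi * P y * M \<noteq> 0\<^sub>m d d"
proof -
  obtain B where "inverse_mats d (P y) B" using P_inverse[OF y] .
  then show ?thesis using inverse_mats_nonzero[OF inverse_mats_conj[OF M] d_pos] by blast
qed

lemma P_intertwines_conj:
  assumes y: "y \<in> T" and n: "n \<in> N"
  shows "P y * P n = P (y \<otimes> n \<otimes> inv y) * P y"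
proof -
  have yn: "y \<otimes> n \<otimes> inv y \<in> N" using N_conj[OF inertia_K[OF y] n] .
  have "(y \<otimes> n \<otimes> inv y) \<otimes> y = y \<otimes> n" using inertia_carrier[OF y] N_carrier[OF n] by (simp add: m_assoc)
  then show ?thesis using P_mult_right[OF n y] P_mult_left[OF yn y] by simp
qed

end

context irr_assoc_proj
begin

definition conj_rep :: "'a \<Rightarrow> (complex \<Rightarrow> complex) \<Rightarrow> 'a \<Rightarrow> complex mat" where
  "conj_rep h \<sigma> y = map_mat \<sigma> (P (h \<otimes> y \<otimes> inv h))"

lemma is_mu_iff:
  "is_mu G K N \<theta> P h \<sigma> \<mu> \<longleftrightarrow> (\<forall>y. y \<notin> T \<longrightarrow> \<mu> y = 0) \<and> (\<forall>y\<in>T. \<mu> y \<noteq> 0) \<and>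
     (\<forall>y\<in>T. \<forall>n\<in>N. \<mu> (n \<otimes> y) = \<mu> y) \<and> \<mu> \<one> = 1 \<and>
     (\<exists>M Mi. inverse_mats d M Mi \<and> (\<forall>y\<in>T. conj_rep h \<sigma> y = \<mu> y \<cdot>\<^sub>m (Mi * P y * M)))"
proof -
  have "(\<exists>M Mi. M \<in> carrier_mat d d \<and> Mi \<in> carrier_mat d d \<and> inverts_mat M Mi \<and> inverts_mat Mi M \<and> R M Mi)
      \<longleftrightarrow> (\<exists>M Mi. inverse_mats d M Mi \<and> R M Mi)" for R :: "complex mat \<Rightarrow> complex mat \<Rightarrow> bool"
    unfolding inverse_mats_def inverts_mat_def by (metis carrier_matD(1))
  then show ?thesis unfolding is_mu_def Let_def P_one index_one_mat(2) conj_rep_def by presburger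
qed

lemma is_mu_one_on_N: "is_mu G K N \<theta> P h \<sigma> \<mu> \<Longrightarrow> n \<in> N \<Longrightarrow> \<mu> n = 1"
  unfolding is_mu_iff using one_inertia N_carrier by (metis r_one)

lemma is_mu_unique:
  assumes \<mu>1: "is_mu G K N \<theta> P h \<sigma> \<mu>1" and \<mu>2: "is_mu G K N \<theta> P h \<sigma> \<mu>2"
  shows "\<mu>1 = \<mu>2"
proof
  obtain M1 Mi1 where M1: "inverse_mats d M1 Mi1"
    and e1: "\<And>y. y \<in> T \<Longrightarrow> conj_rep h \<sigma> y = \<mu>1 y \<cdot>\<^sub>m (Mi1 * P y * M1)"
    using \<mu>1 unfolding is_mu_iff by blast
  obtain M2 Mi2 where M2: "inverse_mats d M2 Mi2"
    and e2: "\<And>y. y \<in> T \<Longrightarrow> conj_rep h \<sigma> y = \<mu>2 y \<cdot>\<^sub>m (Mi2 * P y * M2)"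
    using \<mu>2 unfolding is_mu_iff by blast
  have conj_eq: "Mi1 * P y * M1 = Mi2 * P y * M2" if "y \<in> T" for y
  proof (rule irr_rep_conj_eq[OF P_irr M1 M2 _ P_carrier[OF that]])
    fix n assume n: "n \<in> N"
    then show "Mi1 * P n * M1 = Mi2 * P n * M2"
      using e1[of n] e2[of n] is_mu_one_on_N[OF \<mu>1 n] is_mu_one_on_N[OF \<mu>2 n] N_sub_inertia by auto
  qed
  fix y show "\<mu>1 y = \<mu>2 y"
  proof (cases "y \<in> T")
    case True
    have "\<mu>1 y \<cdot>\<^sub>m (Mi1 * P y * M1) = \<mu>2 y \<cdot>\<^sub>m (Mi1 * P y * M1)"
      using e1[OF True] e2[OF True] conj_eq[OF True] by simp
    then show ?thesis by (rule smult_mat_cancel[OF P_conj_carrier[OF M1 True] P_conj_nonzero[OF M1 True]])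
  next
    case False
    then show ?thesis using \<mu>1 \<mu>2 unfolding is_mu_iff by simp
  qed
qed

context
  fixes h \<sigma> p assumes hs: "(h, \<sigma>) \<in> pstab G p K N \<theta>"
begin

lemma conj_rep_mult:
  assumes n: "n \<in> N" and y: "y \<in> T"
  shows conj_rep_mult_left: "conj_rep h \<sigma> (n \<otimes> y) = conj_rep h \<sigma> n * conj_rep h \<sigma> y"
    and conj_rep_mult_right: "conj_rep h \<sigma> (y \<otimes> n) = conj_rep h \<sigma> y * conj_rep h \<sigma> n"
proof -
  have hK: "h \<in> K" and \<sigma>: "\<sigma> \<in> GalQab" using pstabD[OF hs] by auto
  have hc: "h \<in> carrier G" using K_carrier[OF hK] .
  have nc: "n \<in> carrier G" and yc: "y \<in> carrier G" using N_carrier[OF n] inertia_carrier[OF y] .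
  have hn: "h \<otimes> n \<otimes> inv h \<in> N" and hy: "h \<otimes> y \<otimes> inv h \<in> T"
    using N_conj[OF hK n] inertia_conj[OF hs y] .
  have hnT: "h \<otimes> n \<otimes> inv h \<in> T" using hn N_sub_inertia by blast
  have "h \<otimes> (n \<otimes> y) \<otimes> inv h = (h \<otimes> n \<otimes> inv h) \<otimes> (h \<otimes> y \<otimes> inv h)"
    and "h \<otimes> (y \<otimes> n) \<otimes> inv h = (h \<otimes> y \<otimes> inv h) \<otimes> (h \<otimes> n \<otimes> inv h)"
    using hc nc yc by (simp_all add: m_assoc)
  then show "conj_rep h \<sigma> (n \<otimes> y) = conj_rep h \<sigma> n * conj_rep h \<sigma> y"
    and "conj_rep h \<sigma> (y \<otimes> n) = conj_rep h \<sigma> y * conj_rep h \<sigma> n"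
    unfolding conj_rep_def using P_mult_left[OF hn hy] P_mult_right[OF hn hy]
      map_mat_GalQab_mult[OF \<sigma> P_carrier[OF hnT] P_carrier[OF hy] P_Qab[OF hnT] P_Qab[OF hy]]
      map_mat_GalQab_mult[OF \<sigma> P_carrier[OF hy] P_carrier[OF hnT] P_Qab[OF hy] P_Qab[OF hnT]]
    by simp_all
qed

lemma conj_rep_carrier: "y \<in> T \<Longrightarrow> conj_rep h \<sigma> y \<in> carrier_mat d d"
  unfolding conj_rep_def using P_carrier inertia_conj[OF hs] by simp

lemma conj_rep_one: "conj_rep h \<sigma> \<one> = 1\<^sub>m d"
  unfolding conj_rep_def using pstabD[OF hs] K_carrier P_one map_mat_GalQab_one by simp

lemma conj_rep_is_rep: "is_rep G N d (conj_rep h \<sigma>)"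
  unfolding is_rep_def using conj_rep_carrier conj_rep_one conj_rep_mult_left N_sub_inertia by auto

lemma mtrace_conj_rep:
  assumes n: "n \<in> N"
  shows "mtrace (conj_rep h \<sigma> n) = mtrace (P n)"
proof -
  have hK: "h \<in> K" and \<sigma>: "\<sigma> \<in> GalQab" using pstabD[OF hs] by auto
  have hn: "h \<otimes> n \<otimes> inv h \<in> N" using N_conj[OF hK n] .
  then have hnT: "h \<otimes> n \<otimes> inv h \<in> T" using N_sub_inertia by blast
  have "mtrace (conj_rep h \<sigma> n) = \<sigma> (mtrace (P (h \<otimes> n \<otimes> inv h)))"
    unfolding conj_rep_def by (rule mtrace_map_mat_GalQab[OF \<sigma> P_carrier[OF hnT] P_Qab[OF hnT]])
  also have "\<dots> = \<theta> n" using pstabD(3)[OF hs n] theta_mtrace[OF hn] by simp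
  finally show ?thesis using theta_mtrace[OF n] by simp
qed

lemma conj_rep_nonzero:
  assumes y: "y \<in> T"
  shows "conj_rep h \<sigma> y \<noteq> 0\<^sub>m d d"
proof
  have \<sigma>: "\<sigma> \<in> GalQab" using pstabD[OF hs] by auto
  have hy: "h \<otimes> y \<otimes> inv h \<in> T" using inertia_conj[OF hs y] .
  assume "conj_rep h \<sigma> y = 0\<^sub>m d d"
  then have "P (h \<otimes> y \<otimes> inv h) = 0\<^sub>m d d"
    unfolding conj_rep_def using map_mat_GalQab_eq_zero[OF \<sigma> P_carrier[OF hy] P_Qab[OF hy]] by blast
  moreover obtain B where "inverse_mats d (P (h \<otimes> y \<otimes> inv h)) B" using P_inverse[OF hy] .
  ultimately show False using inverse_mats_nonzero d_pos by metis
qed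

lemma conj_rep_intertwines_conj:
  assumes y: "y \<in> T" and n: "n \<in> N"
  shows "conj_rep h \<sigma> y * conj_rep h \<sigma> n = conj_rep h \<sigma> (y \<otimes> n \<otimes> inv y) * conj_rep h \<sigma> y"
proof -
  have yn: "y \<otimes> n \<otimes> inv y \<in> N" using N_conj[OF inertia_K[OF y] n] .
  have "(y \<otimes> n \<otimes> inv y) \<otimes> y = y \<otimes> n" using inertia_carrier[OF y] N_carrier[OF n] by (simp add: m_assoc)
  then show ?thesis using conj_rep_mult_right[OF n y] conj_rep_mult_left[OF yn y] by simp
qed

lemma conj_rep_proportional:
  assumes S: "inverse_mats d S Si" and S_int: "\<And>n. n \<in> N \<Longrightarrow> S * P n = conj_rep h \<sigma> n * S"
    and y: "y \<in> T"
  obtains c where "conj_rep h \<sigma> y = c \<cdot>\<^sub>m (S * P y * Si)"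
proof -
  let ?Q = "conj_rep h \<sigma>"
  have Sc: "S \<in> carrier_mat d d" and Sic: "Si \<in> carrier_mat d d" and SSi: "S * Si = 1\<^sub>m d"
    using S unfolding inverse_mats_def by auto
  have Qy: "?Q y \<in> carrier_mat d d" using conj_rep_carrier[OF y] .
  have SiQ: "Si * ?Q n = P n * Si" if n: "n \<in> N" for n
  proof -
    have nT: "n \<in> T" using n N_sub_inertia by blast
    have "?Q n = S * P n * Si"
      by (rule inverse_mats_conj_swap(2)[OF S P_carrier[OF nT] conj_rep_carrier[OF nT] S_int[OF n]])
    then have "Si * ?Q n = Si * (S * (P n * Si))"
      using Sc Sic P_carrier[OF nT] by (simp add: assoc_mult_mat[of _ d d _ d _ d])
    also have "\<dots> = P n * Si" using inverse_mats_cancel(2)[OF S, of "P n * Si" d] Sic P_carrier[OF nT] by simp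
    finally show ?thesis .
  qed
  define D where "D = Si * ?Q y * S"
  have Dc: "D \<in> carrier_mat d d" unfolding D_def using Sc Sic Qy by simp
  have D_int: "D * P n = P (y \<otimes> n \<otimes> inv y) * D" if n: "n \<in> N" for n
  proof -
    have yn: "y \<otimes> n \<otimes> inv y \<in> N" using N_conj[OF inertia_K[OF y] n] .
    have nT: "n \<in> T" and ynT: "y \<otimes> n \<otimes> inv y \<in> T" using n yn N_sub_inertia by auto
    have "D * P n = Si * (?Q y * ?Q n) * S"
      unfolding D_def using Sic Qy Sc P_carrier[OF nT] conj_rep_carrier[OF nT] S_int[OF n]
      by (simp add: assoc_mult_mat[of _ d d _ d _ d])
    also have "\<dots> = (Si * ?Q (y \<otimes> n \<otimes> inv y)) * ?Q y * S"
      unfolding conj_rep_intertwines_conj[OF y n]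
      using Sic Qy conj_rep_carrier[OF ynT] by (simp add: assoc_mult_mat[of _ d d _ d _ d])
    also have "\<dots> = P (y \<otimes> n \<otimes> inv y) * D"
      unfolding SiQ[OF yn] D_def using Sic Qy Sc P_carrier[OF ynT]
      by (simp add: assoc_mult_mat[of _ d d _ d _ d])
    finally show ?thesis .
  qed
  have conj_carrier: "P (y \<otimes> n \<otimes> inv y) \<in> carrier_mat d d" if "n \<in> N" for n
    using P_carrier N_conj[OF inertia_K[OF y] that] N_sub_inertia by blast
  obtain B where B: "inverse_mats d (P y) B" using P_inverse[OF y] .
  obtain c where c: "D = c \<cdot>\<^sub>m P y"
    using irr_rep_intertwiners_proportional[OF P_irr conj_carrier Dc B D_int P_intertwines_conj[OF y]] .
  have "S * D * Si = S * Si * ?Q y * (S * Si)"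
    unfolding D_def using Sc Sic Qy by (simp add: assoc_mult_mat[of _ d d _ d _ d])
  then have "?Q y = S * D * Si" unfolding SSi using Qy by simp
  also have "\<dots> = c \<cdot>\<^sub>m (S * P y * Si)"
    unfolding c using Sc Sic P_carrier[OF y]
    by (simp add: mult_smult_assoc_mat[of _ d d _ d] mult_smult_distrib[of _ d d _ d])
  finally show thesis by (rule that)
qed

lemma is_muI:
  assumes M: "inverse_mats d M Mi"
    and eq: "\<And>y. y \<in> T \<Longrightarrow> conj_rep h \<sigma> y = \<mu> y \<cdot>\<^sub>m (Mi * P y * M)"
    and one_on_N: "\<And>n. n \<in> N \<Longrightarrow> \<mu> n = 1" and zero: "\<And>y. y \<notin> T \<Longrightarrow> \<mu> y = 0"
  shows "is_mu G K N \<theta> P h \<sigma> \<mu>"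
  unfolding is_mu_iff
proof (intro conjI ballI allI impI exI)
  show "\<mu> y = 0" if "y \<notin> T" for y using zero[OF that] .
  show "\<mu> y \<noteq> 0" if y: "y \<in> T" for y
  proof
    assume "\<mu> y = 0"
    then have "conj_rep h \<sigma> y = 0\<^sub>m d d" using eq[OF y] zero_smult_mat[OF P_conj_carrier[OF M y]] by simp
    with conj_rep_nonzero[OF y] show False ..
  qed
  show "\<mu> (n \<otimes> y) = \<mu> y" if y: "y \<in> T" and n: "n \<in> N" for y n
  proof -
    have nT: "n \<in> T" using n N_sub_inertia by blast
    have ny: "n \<otimes> y \<in> T" using inertia_mult[OF nT y] .
    have Mc: "M \<in> carrier_mat d d" and Mic: "Mi \<in> carrier_mat d d"
      using M unfolding inverse_mats_def by simp_all
    have "\<mu> (n \<otimes> y) \<cdot>\<^sub>m (Mi * P (n \<otimes> y) * M) = (Mi * P n * M) * (\<mu> y \<cdot>\<^sub>m (Mi * P y * M))"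
      using eq[OF ny] eq[OF nT] eq[OF y] one_on_N[OF n] conj_rep_mult_left[OF n y] by simp
    also have "\<dots> = \<mu> y \<cdot>\<^sub>m (Mi * (P n * P y) * M)"
      using Mc Mic P_carrier[OF nT] P_carrier[OF y] inverse_mats_cancel(1)[OF M, of "P y * M" d]
      by (simp add: mult_smult_distrib[of _ d d _ d] assoc_mult_mat[of _ d d _ d _ d])
    finally show ?thesis
      using P_mult_left[OF n y] smult_mat_cancel[OF P_conj_carrier[OF M ny] P_conj_nonzero[OF M ny]] by simp
  qed
  show "\<mu> \<one> = 1" using one_on_N[OF subgroup.one_closed[OF N_subgroup]] .
  show "inverse_mats d M Mi" by (rule M)
  show "conj_rep h \<sigma> y = \<mu> y \<cdot>\<^sub>m (Mi * P y * M)" if "y \<in> T" for y using eq[OF that] .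
qed

lemma is_mu_exists: "\<exists>\<mu>. is_mu G K N \<theta> P h \<sigma> \<mu>"
proof -
  obtain S Si where S: "inverse_mats d S Si" and S_int: "\<And>n. n \<in> N \<Longrightarrow> S * P n = conj_rep h \<sigma> n * S"
    using irr_rep_equiv_if_mtrace_eq[OF is_group N_subgroup N_finite P_irr conj_rep_is_rep]
      mtrace_conj_rep by metis
  have Si: "inverse_mats d Si S" using inverse_mats_sym[OF S] .
  have "\<forall>y\<in>T. \<exists>c. conj_rep h \<sigma> y = c \<cdot>\<^sub>m (S * P y * Si)"
    using conj_rep_proportional[OF S S_int] by metis
  then obtain c where c: "\<And>y. y \<in> T \<Longrightarrow> conj_rep h \<sigma> y = c y \<cdot>\<^sub>m (S * P y * Si)" by metis
  define \<mu> where "\<mu> y = (if y \<in> T then c y else 0)" for y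
  have eq: "conj_rep h \<sigma> y = \<mu> y \<cdot>\<^sub>m (S * P y * Si)" if "y \<in> T" for y
    using c[OF that] that unfolding \<mu>_def by simp
  have zero: "\<mu> y = 0" if "y \<notin> T" for y
    using that unfolding \<mu>_def by simp
  have one_on_N: "\<mu> n = 1" if n: "n \<in> N" for n
  proof -
    have nT: "n \<in> T" using n N_sub_inertia by blast
    have "conj_rep h \<sigma> n = S * P n * Si"
      by (rule inverse_mats_conj_swap(2)[OF S P_carrier[OF nT] conj_rep_carrier[OF nT] S_int[OF n]])
    then have "\<mu> n \<cdot>\<^sub>m (S * P n * Si) = 1 \<cdot>\<^sub>m (S * P n * Si)" using eq[OF nT] by simp
    then show ?thesis by (rule smult_mat_cancel[OF P_conj_carrier[OF Si nT] P_conj_nonzero[OF Si nT]])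
  qed
  show ?thesis using is_muI[OF Si eq one_on_N zero] by blast
qed

lemma mu_is_mu: "is_mu G K N \<theta> P h \<sigma> (mu G K N \<theta> P h \<sigma>)"
  unfolding mu_def by (rule theI'[of "is_mu G K N \<theta> P h \<sigma>"]) (use is_mu_exists is_mu_unique in blast)

lemma mu_eqI: "is_mu G K N \<theta> P h \<sigma> \<mu> \<Longrightarrow> mu G K N \<theta> P h \<sigma> = \<mu>"
  using mu_is_mu is_mu_unique by blast

end

end
section \<open>Quotients by a normal subgroup in the kernel\<close>

definition coset_rep :: "'a set \<Rightarrow> 'a" where
  "coset_rep X = (SOME x. x \<in> X)"

lemma qfun_coset_rep: "qfun f X = f (coset_rep X)"
  unfolding qfun_def coset_rep_def ..

lemma qimg_mem: "s \<in> S \<Longrightarrow> L #>\<^bsub>G\<^esub> s \<in> qimg G L S"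
  unfolding qimg_def by simp

lemma qimg_mono: "S \<subseteq> S' \<Longrightarrow> qimg G L S \<subseteq> qimg G L S'"
  unfolding qimg_def by auto

context normal
begin

lemma coset_rep_in_rcos: "a \<in> carrier G \<Longrightarrow> coset_rep (H #> a) \<in> H #> a"
  unfolding coset_rep_def using rcos_self[OF _ subgroup_axioms] by (metis someI_ex)

lemma coset_rep_rcos: "a \<in> carrier G \<Longrightarrow> \<exists>h\<in>H. coset_rep (H #> a) = h \<otimes> a"
  using coset_rep_in_rcos unfolding r_coset_def by blast

lemma rcos_coset_rep: "a \<in> carrier G \<Longrightarrow> H #> coset_rep (H #> a) = H #> a"
  using repr_independence[OF coset_rep_in_rcos _ subgroup_axioms] by simp

lemma rcos_eqD:
  assumes "a \<in> carrier G" and "H #> a = H #> b"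
  shows "\<exists>h\<in>H. a = h \<otimes> b"
proof -
  have "a \<in> H #> b" using rcos_self[OF assms(1) subgroup_axioms] assms(2) by simp
  then show ?thesis unfolding r_coset_def by blast
qed

lemma coset_rep_qimg:
  assumes sat: "\<And>h s. h \<in> H \<Longrightarrow> s \<in> S \<Longrightarrow> h \<otimes> s \<in> S" and S: "S \<subseteq> carrier G"
    and X: "X \<in> qimg G H S"
  shows "coset_rep X \<in> S" and "H #> coset_rep X = X"
proof -
  obtain s where s: "s \<in> S" and X_eq: "X = H #> s" using X unfolding qimg_def by auto
  have sc: "s \<in> carrier G" using S s by blast
  obtain h where "h \<in> H" "coset_rep X = h \<otimes> s" using coset_rep_rcos[OF sc] X_eq by blast
  then show "coset_rep X \<in> S" using sat s by simp
  show "H #> coset_rep X = X" using rcos_coset_rep[OF sc] X_eq by simp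
qed

lemma carrier_Mod_qimg: "carrier (G Mod H) = qimg G H (carrier G)"
  unfolding carrier_FactGroup qimg_def ..

lemma rcos_mult_Mod: "a \<in> carrier G \<Longrightarrow> b \<in> carrier G \<Longrightarrow> (H #> a) \<otimes>\<^bsub>G Mod H\<^esub> (H #> b) = H #> (a \<otimes> b)"
  by (simp add: rcos_sum)

lemma rcos_inv_Mod: "a \<in> carrier G \<Longrightarrow> inv\<^bsub>G Mod H\<^esub> (H #> a) = H #> inv a"
  by (simp add: inv_FactGroup carrier_FactGroup rcos_inv)

lemma rcos_conj_Mod:
  "a \<in> carrier G \<Longrightarrow> b \<in> carrier G \<Longrightarrow>
    (H #> a) \<otimes>\<^bsub>G Mod H\<^esub> (H #> b) \<otimes>\<^bsub>G Mod H\<^esub> inv\<^bsub>G Mod H\<^esub> (H #> a) = H #> (a \<otimes> b \<otimes> inv a)"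
  by (simp add: rcos_sum rcos_inv_Mod)

lemma coset_rep_Mod:
  assumes "X \<in> carrier (G Mod H)"
  shows "coset_rep X \<in> carrier G" and "H #> coset_rep X = X"
  using coset_rep_qimg[of "carrier G" X] assms unfolding carrier_Mod_qimg by auto

lemma mult_Mod_coset_rep:
  "X \<in> carrier (G Mod H) \<Longrightarrow> Y \<in> carrier (G Mod H) \<Longrightarrow>
    X \<otimes>\<^bsub>G Mod H\<^esub> Y = H #> (coset_rep X \<otimes> coset_rep Y)"
  using coset_rep_Mod rcos_mult_Mod by metis

lemma qimg_set_mult:
  assumes "A \<subseteq> carrier G" and "B \<subseteq> carrier G"
  shows "qimg G H (A <#> B) = qimg G H A <#>\<^bsub>G Mod H\<^esub> qimg G H B"
proof -
  have "qimg G H (A <#> B) = (\<Union>a\<in>A. \<Union>b\<in>B. {H #> (a \<otimes> b)})"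
    unfolding qimg_def set_mult_def by blast
  also have "\<dots> = (\<Union>a\<in>A. \<Union>b\<in>B. {(H #> a) \<otimes>\<^bsub>G Mod H\<^esub> (H #> b)})"
    using assms rcos_mult_Mod by (intro SUP_cong refl) blast
  also have "\<dots> = qimg G H A <#>\<^bsub>G Mod H\<^esub> qimg G H B"
    unfolding qimg_def set_mult_def by blast
  finally show ?thesis .
qed

lemma qimg_Int:
  assumes sat: "\<And>h b. h \<in> H \<Longrightarrow> b \<in> B \<Longrightarrow> h \<otimes> b \<in> B" and A: "A \<subseteq> carrier G"
  shows "qimg G H A \<inter> qimg G H B = qimg G H (A \<inter> B)"
proof (intro equalityI subsetI)
  fix X assume "X \<in> qimg G H A \<inter> qimg G H B"
  then obtain a b where a: "a \<in> A" and b: "b \<in> B" and X: "X = H #> a" "X = H #> b"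
    unfolding qimg_def by blast
  obtain h where "h \<in> H" and "a = h \<otimes> b" using rcos_eqD[of a b] A a X by auto
  then have "a \<in> A \<inter> B" using sat b a by simp
  then show "X \<in> qimg G H (A \<inter> B)" unfolding X(1) by (rule qimg_mem)
qed (auto simp: qimg_def)

lemma qimg_subgroup: "subgroup S G \<Longrightarrow> subgroup (qimg G H S) (G Mod H)"
proof -
  have "group_hom G (G Mod H) (\<lambda>a. H #> a)"
    unfolding group_hom_def group_hom_axioms_def using is_group factorgroup_is_group r_coset_hom_Mod by blast
  then show "subgroup S G \<Longrightarrow> subgroup (qimg G H S) (G Mod H)"
    unfolding qimg_def using group_hom.subgroup_img_is_subgroup by blast
qed

end

locale irr_assoc_proj_quot = irr_assoc_proj +
  fixes L :: "'a set"
  assumes L_normal: "L \<lhd> G" and L_sub_N: "L \<subseteq> N" and P_L: "\<And>l. l \<in> L \<Longrightarrow> P l = 1\<^sub>m d"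
begin

lemmas rcos_in_qimg = qimg_mem[of _ _ G L]

lemma L_mult_N: "l \<in> L \<Longrightarrow> n \<in> N \<Longrightarrow> l \<otimes> n \<in> N"
  using subgroup.m_closed[OF N_subgroup] L_sub_N by blast

lemma L_mult_inertia: "l \<in> L \<Longrightarrow> y \<in> T \<Longrightarrow> l \<otimes> y \<in> T"
  using inertia_mult L_sub_N N_sub_inertia by blast

lemma P_L_mult: "l \<in> L \<Longrightarrow> y \<in> T \<Longrightarrow> P (l \<otimes> y) = P y"
  using P_mult_left[of l y] P_L[of l] L_sub_N P_carrier[of y] by auto

lemma theta_L_mult: "l \<in> L \<Longrightarrow> n \<in> N \<Longrightarrow> \<theta> (l \<otimes> n) = \<theta> n"
  using theta_mtrace L_mult_N P_L_mult N_sub_inertia by (metis subsetD)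

lemma coset_rep_qimg_N: "X \<in> qimg G L N \<Longrightarrow> coset_rep X \<in> N"
  using normal.coset_rep_qimg(1)[OF L_normal L_mult_N] N_carrier by blast

lemma coset_rep_qimg_inertia: "X \<in> qimg G L T \<Longrightarrow> coset_rep X \<in> T"
  using normal.coset_rep_qimg(1)[OF L_normal L_mult_inertia] inertia_carrier by blast

lemma P_coset_rep: "y \<in> T \<Longrightarrow> P (coset_rep (L #> y)) = P y"
  using normal.coset_rep_rcos[OF L_normal inertia_carrier] P_L_mult by metis

lemma qfun_theta: "n \<in> N \<Longrightarrow> qfun \<theta> (L #> n) = \<theta> n"
  unfolding qfun_coset_rep using normal.coset_rep_rcos[OF L_normal N_carrier] theta_L_mult by metis

lemma qimg_sub_Mod: "S \<subseteq> carrier G \<Longrightarrow> qimg G L S \<subseteq> carrier (G Mod L)"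
  using normal.carrier_Mod_qimg[OF L_normal] qimg_mono by blast

lemma qfun_theta_conj:
  "x \<in> K \<Longrightarrow> n \<in> N \<Longrightarrow>
    qfun \<theta> ((L #> x) \<otimes>\<^bsub>G Mod L\<^esub> (L #> n) \<otimes>\<^bsub>G Mod L\<^esub> inv\<^bsub>G Mod L\<^esub> (L #> x)) = \<theta> (x \<otimes> n \<otimes> inv x)"
  using normal.rcos_conj_Mod[OF L_normal K_carrier N_carrier] qfun_theta N_conj by simp

lemma inertia_qimg:
  assumes K': "K' \<subseteq> K"
  shows "inertia (G Mod L) (qimg G L K') (qimg G L N) (qfun \<theta>) = qimg G L (inertia G K' N \<theta>)"
proof -
  have stab_iff: "(\<forall>Y\<in>qimg G L N. qfun \<theta> ((L #> x) \<otimes>\<^bsub>G Mod L\<^esub> Y \<otimes>\<^bsub>G Mod L\<^esub> inv\<^bsub>G Mod L\<^esub> (L #> x)) = qfun \<theta> Y)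
      \<longleftrightarrow> (\<forall>n\<in>N. \<theta> (x \<otimes> n \<otimes> inv x) = \<theta> n)" if x: "x \<in> K'" for x
    using qfun_theta_conj[of x] qfun_theta K' x unfolding qimg_def by auto
  show ?thesis
  proof (intro equalityI subsetI)
    fix X assume X: "X \<in> inertia (G Mod L) (qimg G L K') (qimg G L N) (qfun \<theta>)"
    then obtain x where x: "x \<in> K'" and X_eq: "X = L #> x" unfolding inertia_def qimg_def by auto
    then have "x \<in> inertia G K' N \<theta>" using X stab_iff unfolding inertia_def by auto
    then show "X \<in> qimg G L (inertia G K' N \<theta>)" unfolding X_eq by (rule qimg_mem)
  next
    fix X assume "X \<in> qimg G L (inertia G K' N \<theta>)"
    then obtain x where x: "x \<in> inertia G K' N \<theta>" and X_eq: "X = L #> x" unfolding qimg_def by auto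
    have xK': "x \<in> K'" using x unfolding inertia_def by auto
    then show "X \<in> inertia (G Mod L) (qimg G L K') (qimg G L N) (qfun \<theta>)"
      using x stab_iff[OF xK'] rcos_in_qimg[OF xK'] unfolding X_eq inertia_def by auto
  qed
qed

lemma pstab_qimg:
  assumes x: "x \<in> K'" and K': "K' \<subseteq> K"
  shows "(L #> x, \<sigma>) \<in> pstab (G Mod L) p (qimg G L K') (qimg G L N) (qfun \<theta>) \<longleftrightarrow> (x, \<sigma>) \<in> pstab G p K' N \<theta>"
proof -
  have "(\<forall>Y\<in>qimg G L N. \<sigma> (qfun \<theta> ((L #> x) \<otimes>\<^bsub>G Mod L\<^esub> Y \<otimes>\<^bsub>G Mod L\<^esub> inv\<^bsub>G Mod L\<^esub> (L #> x))) = qfun \<theta> Y)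
      \<longleftrightarrow> (\<forall>n\<in>N. \<sigma> (\<theta> (x \<otimes> n \<otimes> inv x)) = \<theta> n)"
    using qfun_theta_conj[of x] qfun_theta x K' unfolding qimg_def by auto
  then show ?thesis using rcos_in_qimg[OF x] x unfolding pstab_def by auto
qed

lemma qimg_normal_in: "normal_in (G Mod L) (qimg G L K) (qimg G L N)"
  unfolding normal_in_def
proof (intro conjI ballI)
  show "subgroup (qimg G L N) (G Mod L)" using normal.qimg_subgroup[OF L_normal N_subgroup] .
  show "qimg G L N \<subseteq> qimg G L K" using qimg_mono[OF N_sub_K] .
  fix X Y assume "X \<in> qimg G L K" and "Y \<in> qimg G L N"
  then obtain x n where x: "x \<in> K" and n: "n \<in> N" and eq: "X = L #> x" "Y = L #> n"
    unfolding qimg_def by auto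
  show "X \<otimes>\<^bsub>G Mod L\<^esub> Y \<otimes>\<^bsub>G Mod L\<^esub> inv\<^bsub>G Mod L\<^esub> X \<in> qimg G L N"
    unfolding eq normal.rcos_conj_Mod[OF L_normal K_carrier[OF x] N_carrier[OF n]]
    using N_conj[OF x n] by (rule qimg_mem)
qed

lemma mult_qimg:
  assumes "X \<in> qimg G L S" and "Y \<in> qimg G L S'" and "S \<subseteq> carrier G" and "S' \<subseteq> carrier G"
  shows "X \<otimes>\<^bsub>G Mod L\<^esub> Y = L #> (coset_rep X \<otimes> coset_rep Y)"
  using normal.mult_Mod_coset_rep[OF L_normal] qimg_sub_Mod assms by blast

lemma P_coset_rep_mult:
  assumes X: "X \<in> qimg G L S" and Y: "Y \<in> qimg G L S'" and S: "S \<subseteq> carrier G" and S': "S' \<subseteq> carrier G"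
    and T: "coset_rep X \<otimes> coset_rep Y \<in> T"
  shows "P (coset_rep (X \<otimes>\<^bsub>G Mod L\<^esub> Y)) = P (coset_rep X \<otimes> coset_rep Y)"
  unfolding mult_qimg[OF X Y S S'] using P_coset_rep[OF T] .

lemma one_Mod: "\<one>\<^bsub>G Mod L\<^esub> = L #> \<one>"
  using coset_mult_one subgroup.subset[OF normal_imp_subgroup[OF L_normal]] by simp

lemma coset_rep_one: "P (coset_rep \<one>\<^bsub>G Mod L\<^esub>) = 1\<^sub>m d"
  unfolding one_Mod using P_coset_rep[OF one_inertia] P_one by simp

lemma proj_rep_qimg:
  "proj_rep (G Mod L) (qimg G L T) d (P \<circ> coset_rep) (\<lambda>X Y. \<alpha> (coset_rep X) (coset_rep Y))"
  unfolding proj_rep_def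
proof (intro conjI ballI)
  note rT = coset_rep_qimg_inertia
  fix X assume "X \<in> qimg G L T"
  then show "(P \<circ> coset_rep) X \<in> carrier_mat d d" and "invertible_mat ((P \<circ> coset_rep) X)"
    using rT P_proj unfolding proj_rep_def by auto
next
  note rT = coset_rep_qimg_inertia
  have Tc: "T \<subseteq> carrier G" using inertia_carrier by blast
  fix X Y assume X: "X \<in> qimg G L T" and Y: "Y \<in> qimg G L T"
  show "\<alpha> (coset_rep X) (coset_rep Y) \<noteq> 0" using rT[OF X] rT[OF Y] P_proj unfolding proj_rep_def by blast
  show "(P \<circ> coset_rep) X * (P \<circ> coset_rep) Y = \<alpha> (coset_rep X) (coset_rep Y) \<cdot>\<^sub>m (P \<circ> coset_rep) (X \<otimes>\<^bsub>G Mod L\<^esub> Y)"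
    using P_coset_rep_mult[OF X Y Tc Tc inertia_mult[OF rT[OF X] rT[OF Y]]] rT[OF X] rT[OF Y] P_proj
    unfolding proj_rep_def by simp
qed

lemma is_rep_qimg: "is_rep (G Mod L) (qimg G L N) d (P \<circ> coset_rep)"
  unfolding is_rep_def
proof (intro conjI ballI)
  note rN = coset_rep_qimg_N
  show "(P \<circ> coset_rep) X \<in> carrier_mat d d" if "X \<in> qimg G L N" for X
    using rN[OF that] N_sub_inertia P_carrier by auto
  show "(P \<circ> coset_rep) \<one>\<^bsub>G Mod L\<^esub> = 1\<^sub>m d" using coset_rep_one by simp
  have Nc: "N \<subseteq> carrier G" using N_carrier by blast
  fix X Y assume X: "X \<in> qimg G L N" and Y: "Y \<in> qimg G L N"
  have "coset_rep X \<otimes> coset_rep Y \<in> N" using subgroup.m_closed[OF N_subgroup rN[OF X] rN[OF Y]] .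
  then show "(P \<circ> coset_rep) (X \<otimes>\<^bsub>G Mod L\<^esub> Y) = (P \<circ> coset_rep) X * (P \<circ> coset_rep) Y"
    using P_coset_rep_mult[OF X Y Nc Nc] N_sub_inertia is_rep_mult[OF P_rep rN[OF X] rN[OF Y]] by auto
qed

lemma assoc_proj_qimg:
  "assoc_proj (G Mod L) (qimg G L T) (qimg G L N) (qfun \<theta>) d (P \<circ> coset_rep)
     (\<lambda>X Y. \<alpha> (coset_rep X) (coset_rep Y))"
proof -
  have Tc: "T \<subseteq> carrier G" and Nc: "N \<subseteq> carrier G" using inertia_carrier N_carrier by auto
  note rN = coset_rep_qimg_N and rT = coset_rep_qimg_inertia
  have "\<forall>X\<in>qimg G L N. qfun \<theta> X = mtrace ((P \<circ> coset_rep) X)"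
    unfolding qfun_coset_rep using rN theta_mtrace by simp
  moreover have "(P \<circ> coset_rep) (X \<otimes>\<^bsub>G Mod L\<^esub> Y) = (P \<circ> coset_rep) X * (P \<circ> coset_rep) Y"
    and "(P \<circ> coset_rep) (Y \<otimes>\<^bsub>G Mod L\<^esub> X) = (P \<circ> coset_rep) Y * (P \<circ> coset_rep) X"
    if X: "X \<in> qimg G L N" and Y: "Y \<in> qimg G L T" for X Y
  proof -
    have "coset_rep X \<otimes> coset_rep Y \<in> T" and "coset_rep Y \<otimes> coset_rep X \<in> T"
      using inertia_mult rN[OF X] rT[OF Y] N_sub_inertia by auto
    then show "(P \<circ> coset_rep) (X \<otimes>\<^bsub>G Mod L\<^esub> Y) = (P \<circ> coset_rep) X * (P \<circ> coset_rep) Y"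
      and "(P \<circ> coset_rep) (Y \<otimes>\<^bsub>G Mod L\<^esub> X) = (P \<circ> coset_rep) Y * (P \<circ> coset_rep) X"
      using P_coset_rep_mult[OF X Y Nc Tc] P_coset_rep_mult[OF Y X Tc Nc]
        P_mult_left[OF rN[OF X] rT[OF Y]] P_mult_right[OF rN[OF X] rT[OF Y]] by auto
  qed
  ultimately show ?thesis
    unfolding assoc_proj_def using proj_rep_qimg is_rep_qimg by blast
qed

lemma irr_rep_qimg: "irr_rep (G Mod L) (qimg G L N) d (P \<circ> coset_rep)"
proof -
  have P_eq: "(P \<circ> coset_rep) (L #> n) = P n" if "n \<in> N" for n
    using P_coset_rep that N_sub_inertia by auto
  have "rep_invariant_subspace d N P W" if W: "rep_invariant_subspace d (qimg G L N) (P \<circ> coset_rep) W" for W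
  proof -
    have "P n *\<^sub>v w \<in> W" if "n \<in> N" and "w \<in> W" for n w
      using W rcos_in_qimg[OF that(1)] that(2) unfolding rep_invariant_subspace_def P_eq[OF that(1), symmetric]
      by blast
    then show ?thesis using W unfolding rep_invariant_subspace_def by blast
  qed
  then show ?thesis using P_irr is_rep_qimg unfolding irr_rep_iff by blast
qed

lemma quot_irr_assoc_proj:
  "irr_assoc_proj (G Mod L) (qimg G L K) (qimg G L N) (qfun \<theta>) d (P \<circ> coset_rep)
     (\<lambda>X Y. \<alpha> (coset_rep X) (coset_rep Y))"
  unfolding irr_assoc_proj_def irr_assoc_proj_axioms_def inertia_qimg[OF order_refl]
  using normal.factorgroup_is_group[OF L_normal] normal.qimg_subgroup[OF L_normal K_subgroup]
    qimg_normal_in N_finite assoc_proj_qimg irr_rep_qimg coset_rep_qimg_inertia P_Qab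
  unfolding qimg_def by auto

lemma P_coset_rep_conj:
  assumes xs: "(x, \<sigma>) \<in> pstab G p K N \<theta>" and Y: "Y \<in> qimg G L T"
  shows "(P \<circ> coset_rep) ((L #> x) \<otimes>\<^bsub>G Mod L\<^esub> Y \<otimes>\<^bsub>G Mod L\<^esub> inv\<^bsub>G Mod L\<^esub> (L #> x))
    = P (x \<otimes> coset_rep Y \<otimes> inv x)"
proof -
  have rY: "coset_rep Y \<in> T" and Y_eq: "L #> coset_rep Y = Y"
    using coset_rep_qimg_inertia[OF Y] normal.coset_rep_qimg(2)[OF L_normal L_mult_inertia _ Y]
      inertia_carrier by blast+
  have "(L #> x) \<otimes>\<^bsub>G Mod L\<^esub> Y \<otimes>\<^bsub>G Mod L\<^esub> inv\<^bsub>G Mod L\<^esub> (L #> x) = L #> (x \<otimes> coset_rep Y \<otimes> inv x)"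
    using normal.rcos_conj_Mod[OF L_normal K_carrier[OF pstabD(1)[OF xs]] inertia_carrier[OF rY]] Y_eq
    by simp
  then show ?thesis using P_coset_rep[OF inertia_conj[OF xs rY]] by simp
qed

lemma is_mu_coset_rep: "is_mu G K N \<theta> P x \<sigma> \<mu> \<Longrightarrow> w \<in> T \<Longrightarrow> \<mu> (coset_rep (L #> w)) = \<mu> w"
  using normal.coset_rep_rcos[OF L_normal inertia_carrier] L_sub_N unfolding is_mu_iff by fastforce

lemma mu_qimg:
  assumes xs: "(x, \<sigma>) \<in> pstab G p K N \<theta>" and y: "y \<in> T"
  shows "mu (G Mod L) (qimg G L K) (qimg G L N) (qfun \<theta>) (P \<circ> coset_rep) (L #> x) \<sigma> (L #> y)
    = mu G K N \<theta> P x \<sigma> y"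
proof -
  interpret quot: irr_assoc_proj "G Mod L" "qimg G L K" "qimg G L N" "qfun \<theta>" d "P \<circ> coset_rep"
    "\<lambda>X Y. \<alpha> (coset_rep X) (coset_rep Y)"
    by (rule quot_irr_assoc_proj)
  have xs_quot: "(L #> x, \<sigma>) \<in> pstab (G Mod L) p (qimg G L K) (qimg G L N) (qfun \<theta>)"
    using pstab_qimg[OF pstabD(1)[OF xs] order_refl] xs by simp
  have quot_T: "quot.T = qimg G L T" using inertia_qimg[OF order_refl] .
  define \<mu> where "\<mu> = mu G K N \<theta> P x \<sigma>"
  have \<mu>: "is_mu G K N \<theta> P x \<sigma> \<mu>" unfolding \<mu>_def by (rule mu_is_mu[OF xs])
  obtain M Mi where M: "inverse_mats d M Mi"
    and \<mu>_eq: "\<And>y. y \<in> T \<Longrightarrow> conj_rep x \<sigma> y = \<mu> y \<cdot>\<^sub>m (Mi * P y * M)"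
    using \<mu> unfolding is_mu_iff by blast
  define \<mu>' where "\<mu>' Y = (if Y \<in> qimg G L T then \<mu> (coset_rep Y) else 0)" for Y
  have "is_mu (G Mod L) (qimg G L K) (qimg G L N) (qfun \<theta>) (P \<circ> coset_rep) (L #> x) \<sigma> \<mu>'"
  proof (rule quot.is_muI[OF xs_quot M])
    fix Y assume "Y \<in> quot.T"
    then have Y: "Y \<in> qimg G L T" unfolding quot_T .
    then show "quot.conj_rep (L #> x) \<sigma> Y = \<mu>' Y \<cdot>\<^sub>m (Mi * (P \<circ> coset_rep) Y * M)"
      unfolding quot.conj_rep_def P_coset_rep_conj[OF xs Y] \<mu>'_def
      using \<mu>_eq[OF coset_rep_qimg_inertia[OF Y]] unfolding conj_rep_def by simp
  next
    fix Z assume "Z \<in> qimg G L N"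
    then show "\<mu>' Z = 1"
      unfolding \<mu>'_def using qimg_mono[OF N_sub_inertia] coset_rep_qimg_N is_mu_one_on_N[OF \<mu>] by auto
  next
    fix Y assume "Y \<notin> quot.T"
    then show "\<mu>' Y = 0" unfolding quot_T \<mu>'_def by simp
  qed
  then have "mu (G Mod L) (qimg G L K) (qimg G L N) (qfun \<theta>) (P \<circ> coset_rep) (L #> x) \<sigma> = \<mu>'"
    by (rule quot.mu_eqI[OF xs_quot])
  then show ?thesis
    unfolding \<mu>'_def \<mu>_def using rcos_in_qimg[OF y] is_mu_coset_rep[OF \<mu> y] unfolding \<mu>_def by simp
qed

lemma htriple_qimg:
  assumes ht: "htriple G p K N \<theta>"
  shows "htriple (G Mod L) p (qimg G L K) (qimg G L N) (qfun \<theta>)"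
  unfolding htriple_def
proof (intro conjI ballI)
  show "subgroup (qimg G L K) (G Mod L)" using normal.qimg_subgroup[OF L_normal K_subgroup] .
  show "normal_in (G Mod L) (qimg G L K) (qimg G L N)" by (rule qimg_normal_in)
  show "irr_char (G Mod L) (qimg G L N) (qfun \<theta>)"
    using irr_rep_qimg assoc_proj_qimg unfolding irr_char_def assoc_proj_def by blast
  fix X assume "X \<in> qimg G L K"
  then obtain x where x: "x \<in> K" and X: "X = L #> x" unfolding qimg_def by auto
  obtain \<sigma> where \<sigma>: "\<sigma> \<in> HGal p" and conj: "\<And>n. n \<in> N \<Longrightarrow> \<theta> (x \<otimes> n \<otimes> inv x) = \<sigma> (\<theta> n)"
    using ht x unfolding htriple_def by blast
  have "qfun \<theta> (X \<otimes>\<^bsub>G Mod L\<^esub> Y \<otimes>\<^bsub>G Mod L\<^esub> inv\<^bsub>G Mod L\<^esub> X) = \<sigma> (qfun \<theta> Y)"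
    if "Y \<in> qimg G L N" for Y
    using that qfun_theta_conj[OF x] qfun_theta conj unfolding X qimg_def by auto
  then show "\<exists>\<sigma>\<in>HGal p. \<forall>Y\<in>qimg G L N. qfun \<theta> (X \<otimes>\<^bsub>G Mod L\<^esub> Y \<otimes>\<^bsub>G Mod L\<^esub> inv\<^bsub>G Mod L\<^esub> X) = \<sigma> (qfun \<theta> Y)"
    using \<sigma> by blast
qed

end

section \<open>Passing the relation to G/L\<close>

definition ge_c_witness :: "('a, 'b) monoid_scheme \<Rightarrow> nat \<Rightarrow> 'a set \<Rightarrow> ('a \<Rightarrow> complex)
    \<Rightarrow> 'a set \<Rightarrow> 'a set \<Rightarrow> ('a \<Rightarrow> complex) \<Rightarrow> nat \<Rightarrow> ('a \<Rightarrow> complex mat) \<Rightarrow> ('a \<Rightarrow> 'a \<Rightarrow> complex)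
    \<Rightarrow> nat \<Rightarrow> ('a \<Rightarrow> complex mat) \<Rightarrow> ('a \<Rightarrow> 'a \<Rightarrow> complex) \<Rightarrow> bool" where
  "ge_c_witness G p N \<theta> H M \<phi> d P \<alpha> d' P' \<alpha>' \<longleftrightarrow>
     assoc_proj G (inertia G (carrier G) N \<theta>) N \<theta> d P \<alpha> \<and>
     assoc_proj G (inertia G H M \<phi>) M \<phi> d' P' \<alpha>' \<and>
     (\<forall>x\<in>inertia G (carrier G) N \<theta>. elements_mat (P x) \<subseteq> Qab) \<and>
     (\<forall>x\<in>inertia G H M \<phi>. elements_mat (P' x) \<subseteq> Qab) \<and>
     (\<forall>x\<in>inertia G (carrier G) N \<theta>. \<forall>y\<in>inertia G (carrier G) N \<theta>. root_of_unity (\<alpha> x y)) \<and>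
     (\<forall>x\<in>inertia G H M \<phi>. \<forall>y\<in>inertia G H M \<phi>. root_of_unity (\<alpha>' x y)) \<and>
     (\<forall>x\<in>inertia G H N \<theta>. \<forall>y\<in>inertia G H N \<theta>. \<alpha> x y = \<alpha>' x y) \<and>
     (\<forall>c\<in>cent G (carrier G) N. \<exists>s. P c = s \<cdot>\<^sub>m 1\<^sub>m d \<and> P' c = s \<cdot>\<^sub>m 1\<^sub>m d') \<and>
     (\<forall>h \<sigma>. (h, \<sigma>) \<in> pstab G p H N \<theta> \<longrightarrow>
        (\<forall>y\<in>inertia G H N \<theta>. mu G (carrier G) N \<theta> P h \<sigma> y = mu G H M \<phi> P' h \<sigma> y))"

lemma ge_c_iff:
  "ge_c G p N \<theta> H M \<phi> \<longleftrightarrow> htriple G p (carrier G) N \<theta> \<and> htriple G p H M \<phi> \<and>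
     carrier G = N <#>\<^bsub>G\<^esub> H \<and> N \<inter> H = M \<and> cent G (carrier G) N \<subseteq> H \<and>
     pstab G p H N \<theta> = pstab G p H M \<phi> \<and>
     (\<exists>d P \<alpha> d' P' \<alpha>'. ge_c_witness G p N \<theta> H M \<phi> d P \<alpha> d' P' \<alpha>')"
  unfolding ge_c_def ge_c_witness_def ..

locale ge_c_quot = group +
  fixes p :: nat and N H M L :: "'a set" and \<theta> \<phi> :: "'a \<Rightarrow> complex"
    and d d' :: nat and P P' :: "'a \<Rightarrow> complex mat" and \<alpha> \<alpha>' :: "'a \<Rightarrow> 'a \<Rightarrow> complex"
  assumes finite_G: "finite (carrier G)"
    and htriple_N: "htriple G p (carrier G) N \<theta>" and htriple_M: "htriple G p H M \<phi>"
    and N_mult_H: "carrier G = N <#> H" and N_Int_H: "N \<inter> H = M"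
    and cent_sub_H: "cent G (carrier G) N \<subseteq> H"
    and pstab_eq: "pstab G p H N \<theta> = pstab G p H M \<phi>"
    and witness: "ge_c_witness G p N \<theta> H M \<phi> d P \<alpha> d' P' \<alpha>'"
    and L_normal: "L \<lhd> G"
    and L_sub: "L \<subseteq> ker_char G N \<theta> \<inter> ker_char G M \<phi> \<inter> cent G (carrier G) N"
    and cent_Mod: "cent (G Mod L) (carrier (G Mod L)) (qimg G L N) = qimg G L (cent G (carrier G) N)"
begin

lemma P_assoc: "assoc_proj G (inertia G (carrier G) N \<theta>) N \<theta> d P \<alpha>"
  and P'_assoc: "assoc_proj G (inertia G H M \<phi>) M \<phi> d' P' \<alpha>'"
  and P_Qab: "\<And>x. x \<in> inertia G (carrier G) N \<theta> \<Longrightarrow> elements_mat (P x) \<subseteq> Qab"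
  and P'_Qab: "\<And>x. x \<in> inertia G H M \<phi> \<Longrightarrow> elements_mat (P' x) \<subseteq> Qab"
  and \<alpha>_root: "\<And>x y. x \<in> inertia G (carrier G) N \<theta> \<Longrightarrow> y \<in> inertia G (carrier G) N \<theta> \<Longrightarrow> root_of_unity (\<alpha> x y)"
  and \<alpha>'_root: "\<And>x y. x \<in> inertia G H M \<phi> \<Longrightarrow> y \<in> inertia G H M \<phi> \<Longrightarrow> root_of_unity (\<alpha>' x y)"
  and \<alpha>_eq: "\<And>x y. x \<in> inertia G H N \<theta> \<Longrightarrow> y \<in> inertia G H N \<theta> \<Longrightarrow> \<alpha> x y = \<alpha>' x y"
  and P_cent: "\<And>c. c \<in> cent G (carrier G) N \<Longrightarrow> \<exists>s. P c = s \<cdot>\<^sub>m 1\<^sub>m d \<and> P' c = s \<cdot>\<^sub>m 1\<^sub>m d'"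
  and mu_eq: "\<And>h \<sigma> y. (h, \<sigma>) \<in> pstab G p H N \<theta> \<Longrightarrow> y \<in> inertia G H N \<theta> \<Longrightarrow>
      mu G (carrier G) N \<theta> P h \<sigma> y = mu G H M \<phi> P' h \<sigma> y"
  using witness unfolding ge_c_witness_def by blast+

lemma H_subgroup: "subgroup H G" and M_normal: "normal_in G H M"
  using htriple_M unfolding htriple_def by auto

lemma H_carrier: "H \<subseteq> carrier G"
  using subgroup.subset[OF H_subgroup] .

lemma L_sub_N: "L \<subseteq> N" and L_sub_M: "L \<subseteq> M" and L_sub_cent: "L \<subseteq> cent G (carrier G) N"
  using L_sub unfolding ker_char_def by auto

lemma L_sub_H: "L \<subseteq> H"
  using L_sub_cent cent_sub_H by blast

lemma irr_assoc_proj_N: "irr_assoc_proj G (carrier G) N \<theta> d P \<alpha>"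
proof -
  have N_normal: "normal_in G (carrier G) N" and irr: "irr_char G N \<theta>"
    using htriple_N unfolding htriple_def by auto
  have "finite N" using finite_subset[OF _ finite_G] N_normal unfolding normal_in_def by blast
  then have "irr_rep G N d P"
    using irr_rep_if_irr_char[OF is_group _ _ irr] N_normal P_assoc
    unfolding normal_in_def assoc_proj_def by blast
  then show ?thesis
    unfolding irr_assoc_proj_def irr_assoc_proj_axioms_def
    using is_group subgroup_self N_normal P_assoc P_Qab \<open>finite N\<close> by blast
qed

lemma irr_assoc_proj_M: "irr_assoc_proj G H M \<phi> d' P' \<alpha>'"
proof -
  have irr: "irr_char G M \<phi>" using htriple_M unfolding htriple_def by auto
  have "finite M" using finite_subset[OF _ finite_G] M_normal H_carrier unfolding normal_in_def by blast
  then have "irr_rep G M d' P'"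
    using irr_rep_if_irr_char[OF is_group _ _ irr] M_normal P'_assoc
    unfolding normal_in_def assoc_proj_def by blast
  then show ?thesis
    unfolding irr_assoc_proj_def irr_assoc_proj_axioms_def
    using is_group H_subgroup M_normal P'_assoc P'_Qab \<open>finite M\<close> by blast
qed

lemma P_L: "l \<in> L \<Longrightarrow> P l = 1\<^sub>m d" and P'_L: "l \<in> L \<Longrightarrow> P' l = 1\<^sub>m d'"
proof -
  assume l: "l \<in> L"
  interpret irr_assoc_proj G "carrier G" N \<theta> d P \<alpha> by (rule irr_assoc_proj_N)
  obtain s where s: "P l = s \<cdot>\<^sub>m 1\<^sub>m d" "P' l = s \<cdot>\<^sub>m 1\<^sub>m d'" using P_cent l L_sub_cent by blast
  have "s * of_nat d = of_nat d"
    using theta_mtrace[of l] theta_mtrace[OF subgroup.one_closed[OF N_subgroup]] l L_sub L_sub_N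
      s(1) mtrace_smult[of "1\<^sub>m d" d s] P_one unfolding ker_char_def by auto
  then have "s = 1" using d_pos by simp
  then show "P l = 1\<^sub>m d" and "P' l = 1\<^sub>m d'" using s by simp_all
qed

lemma irr_assoc_proj_quot_N: "irr_assoc_proj_quot G (carrier G) N \<theta> d P \<alpha> L"
  unfolding irr_assoc_proj_quot_def irr_assoc_proj_quot_axioms_def
  using irr_assoc_proj_N L_normal L_sub_N P_L by blast

lemma irr_assoc_proj_quot_M: "irr_assoc_proj_quot G H M \<phi> d' P' \<alpha>' L"
  unfolding irr_assoc_proj_quot_def irr_assoc_proj_quot_axioms_def
  using irr_assoc_proj_M L_normal L_sub_M P'_L by blast

end

sublocale ge_c_quot \<subseteq> theta: irr_assoc_proj_quot G "carrier G" N \<theta> d P \<alpha> L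
  by (rule irr_assoc_proj_quot_N)

sublocale ge_c_quot \<subseteq> phi: irr_assoc_proj_quot G H M \<phi> d' P' \<alpha>' L
  by (rule irr_assoc_proj_quot_M)

context ge_c_quot
begin

lemma carrier_Mod: "carrier (G Mod L) = qimg G L (carrier G)"
  using normal.carrier_Mod_qimg[OF L_normal] .

lemma carrier_Mod_eq_set_mult: "carrier (G Mod L) = qimg G L N <#>\<^bsub>G Mod L\<^esub> qimg G L H"
  unfolding carrier_Mod N_mult_H
  using normal.qimg_set_mult[OF L_normal] theta.N_carrier H_carrier by blast

lemma qimg_N_Int_H: "qimg G L N \<inter> qimg G L H = qimg G L M"
proof -
  have "l \<otimes> h \<in> H" if "l \<in> L" and "h \<in> H" for l h
    using subgroup.m_closed[OF H_subgroup] L_sub_H that by blast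
  then show ?thesis
    using normal.qimg_Int[OF L_normal] theta.N_carrier N_Int_H by blast
qed

lemma cent_Mod_sub: "cent (G Mod L) (carrier (G Mod L)) (qimg G L N) \<subseteq> qimg G L H"
  unfolding cent_Mod using qimg_mono[OF cent_sub_H] .

lemma inertia_H_N_sub: "inertia G H N \<theta> \<subseteq> inertia G H M \<phi>"
proof
  fix y assume "y \<in> inertia G H N \<theta>"
  then have "(y, id) \<in> pstab G p H M \<phi>" unfolding pstab_eq[symmetric] inertia_iff_pstab_id[where p = p] .
  then show "y \<in> inertia G H M \<phi>" unfolding inertia_iff_pstab_id[where p = p] .
qed

lemma pstab_Mod_eq:
  "pstab (G Mod L) p (qimg G L H) (qimg G L N) (qfun \<theta>) = pstab (G Mod L) p (qimg G L H) (qimg G L M) (qfun \<phi>)"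
proof -
  have "(X, \<sigma>) \<in> pstab (G Mod L) p (qimg G L H) (qimg G L N) (qfun \<theta>)
      \<longleftrightarrow> (X, \<sigma>) \<in> pstab (G Mod L) p (qimg G L H) (qimg G L M) (qfun \<phi>)" for X \<sigma>
  proof (cases "X \<in> qimg G L H")
    case True
    then obtain x where x: "x \<in> H" and X: "X = L #> x" unfolding qimg_def by auto
    show ?thesis
      unfolding X using theta.pstab_qimg[OF x H_carrier] phi.pstab_qimg[OF x order_refl] pstab_eq by simp
  next
    case False
    then show ?thesis unfolding pstab_def by simp
  qed
  then show ?thesis by auto
qed

lemma coset_rep_inertia_H_N: "X \<in> qimg G L (inertia G H N \<theta>) \<Longrightarrow> coset_rep X \<in> inertia G H N \<theta>"
proof -
  have "l \<otimes> y \<in> inertia G H N \<theta>" if "l \<in> L" and "y \<in> inertia G H N \<theta>" for l y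
    using that subgroup.m_closed[OF H_subgroup] L_sub_H theta.L_mult_inertia
    unfolding theta.inertia_restrict[OF H_carrier] by blast
  moreover have "inertia G H N \<theta> \<subseteq> carrier G" using H_carrier unfolding inertia_def by blast
  ultimately show "X \<in> qimg G L (inertia G H N \<theta>) \<Longrightarrow> coset_rep X \<in> inertia G H N \<theta>"
    using normal.coset_rep_qimg(1)[OF L_normal] by blast
qed

lemma coset_rep_cent: "X \<in> qimg G L (cent G (carrier G) N) \<Longrightarrow> coset_rep X \<in> cent G (carrier G) N"
proof -
  have "l \<otimes> c \<in> cent G (carrier G) N" if l: "l \<in> L" and c: "c \<in> cent G (carrier G) N" for l c
  proof -
    have lc: "l \<in> carrier G" and cc: "c \<in> carrier G" using l L_sub_N theta.N_carrier c
      unfolding cent_def by auto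
    have "l \<otimes> c \<otimes> n = n \<otimes> (l \<otimes> c)" if n: "n \<in> N" for n
    proof -
      have nc: "n \<in> carrier G" using theta.N_carrier[OF n] .
      have "l \<otimes> c \<otimes> n = l \<otimes> (n \<otimes> c)" using c n lc cc nc unfolding cent_def by (simp add: m_assoc)
      also have "\<dots> = n \<otimes> l \<otimes> c" using l n L_sub_cent lc cc nc unfolding cent_def by (auto simp: m_assoc[symmetric])
      finally show ?thesis using lc cc nc by (simp add: m_assoc)
    qed
    then show ?thesis unfolding cent_def using lc cc by simp
  qed
  moreover have "cent G (carrier G) N \<subseteq> carrier G" unfolding cent_def by blast
  ultimately show "X \<in> qimg G L (cent G (carrier G) N) \<Longrightarrow> coset_rep X \<in> cent G (carrier G) N"
    using normal.coset_rep_qimg(1)[OF L_normal] by blast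
qed

lemma mu_Mod_eq:
  assumes Xs: "(X, \<sigma>) \<in> pstab (G Mod L) p (qimg G L H) (qimg G L N) (qfun \<theta>)"
    and Y: "Y \<in> inertia (G Mod L) (qimg G L H) (qimg G L N) (qfun \<theta>)"
  shows "mu (G Mod L) (carrier (G Mod L)) (qimg G L N) (qfun \<theta>) (P \<circ> coset_rep) X \<sigma> Y
    = mu (G Mod L) (qimg G L H) (qimg G L M) (qfun \<phi>) (P' \<circ> coset_rep) X \<sigma> Y"
proof -
  obtain x where x: "x \<in> H" and X: "X = L #> x" using Xs unfolding pstab_def qimg_def by auto
  have xs: "(x, \<sigma>) \<in> pstab G p H N \<theta>" using Xs theta.pstab_qimg[OF x H_carrier] unfolding X by simp
  have "Y \<in> qimg G L (inertia G H N \<theta>)" using Y theta.inertia_qimg[OF H_carrier] by simp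
  then obtain y where y: "y \<in> inertia G H N \<theta>" and Y_eq: "Y = L #> y" unfolding qimg_def by auto
  have yT: "y \<in> inertia G (carrier G) N \<theta>" using y H_carrier unfolding inertia_def by auto
  have "mu (G Mod L) (carrier (G Mod L)) (qimg G L N) (qfun \<theta>) (P \<circ> coset_rep) X \<sigma> Y
      = mu G (carrier G) N \<theta> P x \<sigma> y"
    unfolding X Y_eq carrier_Mod using theta.mu_qimg[OF pstab_mono[OF H_carrier xs] yT] .
  also have "\<dots> = mu G H M \<phi> P' x \<sigma> y" using mu_eq[OF xs y] .
  also have "\<dots> = mu (G Mod L) (qimg G L H) (qimg G L M) (qfun \<phi>) (P' \<circ> coset_rep) X \<sigma> Y"
    unfolding X Y_eq using phi.mu_qimg[of x \<sigma> p y] xs pstab_eq inertia_H_N_sub y by auto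
  finally show ?thesis .
qed

lemma ge_c_witness_Mod:
  "ge_c_witness (G Mod L) p (qimg G L N) (qfun \<theta>) (qimg G L H) (qimg G L M) (qfun \<phi>)
     d (P \<circ> coset_rep) (\<lambda>X Y. \<alpha> (coset_rep X) (coset_rep Y))
     d' (P' \<circ> coset_rep) (\<lambda>X Y. \<alpha>' (coset_rep X) (coset_rep Y))"
  unfolding ge_c_witness_def
proof (intro conjI ballI allI impI)
  note inertia_N = theta.inertia_qimg[OF order_refl, folded carrier_Mod]
    and inertia_M = phi.inertia_qimg[OF order_refl]
    and inertia_H_N = theta.inertia_qimg[OF H_carrier]
  show "assoc_proj (G Mod L) (inertia (G Mod L) (carrier (G Mod L)) (qimg G L N) (qfun \<theta>)) (qimg G L N)
      (qfun \<theta>) d (P \<circ> coset_rep) (\<lambda>X Y. \<alpha> (coset_rep X) (coset_rep Y))"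
    unfolding inertia_N by (rule theta.assoc_proj_qimg)
  show "assoc_proj (G Mod L) (inertia (G Mod L) (qimg G L H) (qimg G L M) (qfun \<phi>)) (qimg G L M)
      (qfun \<phi>) d' (P' \<circ> coset_rep) (\<lambda>X Y. \<alpha>' (coset_rep X) (coset_rep Y))"
    unfolding inertia_M by (rule phi.assoc_proj_qimg)
  show "elements_mat ((P \<circ> coset_rep) X) \<subseteq> Qab"
    if "X \<in> inertia (G Mod L) (carrier (G Mod L)) (qimg G L N) (qfun \<theta>)" for X
    using that theta.coset_rep_qimg_inertia P_Qab unfolding inertia_N by simp
  show "elements_mat ((P' \<circ> coset_rep) X) \<subseteq> Qab"
    if "X \<in> inertia (G Mod L) (qimg G L H) (qimg G L M) (qfun \<phi>)" for X
    using that phi.coset_rep_qimg_inertia P'_Qab unfolding inertia_M by simp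
  show "root_of_unity (\<alpha> (coset_rep X) (coset_rep Y))"
    if "X \<in> inertia (G Mod L) (carrier (G Mod L)) (qimg G L N) (qfun \<theta>)"
      and "Y \<in> inertia (G Mod L) (carrier (G Mod L)) (qimg G L N) (qfun \<theta>)" for X Y
    using that theta.coset_rep_qimg_inertia \<alpha>_root unfolding inertia_N by simp
  show "root_of_unity (\<alpha>' (coset_rep X) (coset_rep Y))"
    if "X \<in> inertia (G Mod L) (qimg G L H) (qimg G L M) (qfun \<phi>)"
      and "Y \<in> inertia (G Mod L) (qimg G L H) (qimg G L M) (qfun \<phi>)" for X Y
    using that phi.coset_rep_qimg_inertia \<alpha>'_root unfolding inertia_M by simp
  show "\<alpha> (coset_rep X) (coset_rep Y) = \<alpha>' (coset_rep X) (coset_rep Y)"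
    if "X \<in> inertia (G Mod L) (qimg G L H) (qimg G L N) (qfun \<theta>)"
      and "Y \<in> inertia (G Mod L) (qimg G L H) (qimg G L N) (qfun \<theta>)" for X Y
    using that coset_rep_inertia_H_N \<alpha>_eq unfolding inertia_H_N by simp
  show "\<exists>s. (P \<circ> coset_rep) C = s \<cdot>\<^sub>m 1\<^sub>m d \<and> (P' \<circ> coset_rep) C = s \<cdot>\<^sub>m 1\<^sub>m d'"
    if "C \<in> cent (G Mod L) (carrier (G Mod L)) (qimg G L N)" for C
    using that coset_rep_cent P_cent unfolding cent_Mod by simp
  show "mu (G Mod L) (carrier (G Mod L)) (qimg G L N) (qfun \<theta>) (P \<circ> coset_rep) X \<sigma> Y
      = mu (G Mod L) (qimg G L H) (qimg G L M) (qfun \<phi>) (P' \<circ> coset_rep) X \<sigma> Y"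
    if "(X, \<sigma>) \<in> pstab (G Mod L) p (qimg G L H) (qimg G L N) (qfun \<theta>)"
      and "Y \<in> inertia (G Mod L) (qimg G L H) (qimg G L N) (qfun \<theta>)" for X \<sigma> Y
    using mu_Mod_eq that .
qed

lemma ge_c_Mod: "ge_c (G Mod L) p (qimg G L N) (qfun \<theta>) (qimg G L H) (qimg G L M) (qfun \<phi>)"
  unfolding ge_c_iff
  using theta.htriple_qimg[OF htriple_N, folded carrier_Mod] phi.htriple_qimg[OF htriple_M]
    carrier_Mod_eq_set_mult qimg_N_Int_H cent_Mod_sub pstab_Mod_eq ge_c_witness_Mod by blast

end

theorem lemma2p4:
  fixes G :: "'a monoid" and p :: nat
    and N H M L :: "'a set" and \<theta> \<phi> :: "'a \<Rightarrow> complex"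
  assumes "prime p"
    and "group G" and "finite (carrier G)"
    and "ge_c G p N \<theta> H M \<phi>"
    and "L \<lhd> G"
    and "L \<subseteq> ker_char G N \<theta> \<inter> ker_char G M \<phi> \<inter> cent G (carrier G) N"
    and "cent (G Mod L) (carrier (G Mod L)) (qimg G L N) = qimg G L (cent G (carrier G) N)"
  shows "ge_c (G Mod L) p (qimg G L N) (qfun \<theta>) (qimg G L H) (qimg G L M) (qfun \<phi>)"
proof -
  obtain d P \<alpha> d' P' \<alpha>' where "ge_c_witness G p N \<theta> H M \<phi> d P \<alpha> d' P' \<alpha>'"
    using assms(4) unfolding ge_c_iff by blast
  then interpret ge_c_quot G p N H M L \<theta> \<phi> d d' P P' \<alpha> \<alpha>'
    using assms(2-) unfolding ge_c_quot_def ge_c_quot_axioms_def ge_c_iff by blast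
  show ?thesis by (rule ge_c_Mod)
qed
end
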